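(* Let $G$ be a connected finite simple graph. Then $G$ is a bridgeless chordal graph without $K_5$-minor if and only if $G$ is obtained from copies of $K_3$ and $K_4$ by successive $0$-sums, $1$-sums and $2$-sums.
   Context: $K_n$ denotes the complete graph on $n$ vertices. A graph is chordal if it has no induced (chordless) cycle of length $\geq 4$. An edge is a bridge if no cycle contains it; bridgeless means no edge is a bridge. A minor of $G$ is a graph obtained by a sequence of edge deletions, edge contractions (removing resulting multiple edges) and vertex deletions. If $G_1=(V_1,E_1)$ and $G_2=(V_2,E_2)$ are graphs such that $V_1\cap V_2$ is a clique in both, their clique sum is the graph with vertex set $V_1\cup V_2$ and edge set $E_1\cup E_2$; it is called a $k$-sum if $|V_1\cap V_2|=k+1$. *)

theory Defs
  imports Main
begin

definition simple_graph :: "'a set \<Rightarrow> 'a set set \<Rightarrow> bool" where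
  "simple_graph V E \<longleftrightarrow> finite V \<and> (\<forall>e\<in>E. \<exists>u v. u \<in> V \<and> v \<in> V \<and> u \<noteq> v \<and> e = {u, v})"

definition connected_graph :: "'a set \<Rightarrow> 'a set set \<Rightarrow> bool" where
  "connected_graph V E \<longleftrightarrow> V \<noteq> {} \<and>
     (\<forall>u\<in>V. \<forall>v\<in>V. (u, v) \<in> {(x, y). {x, y} \<in> E}\<^sup>*)"

definition is_cycle :: "'a set \<Rightarrow> 'a set set \<Rightarrow> 'a list \<Rightarrow> bool" where
  "is_cycle V E cs \<longleftrightarrow> length cs \<ge> 3 \<and> distinct cs \<and> set cs \<subseteq> V \<and>
     (\<forall>i < length cs. {cs ! i, cs ! ((i + 1) mod length cs)} \<in> E)"

definition cycle_edges :: "'a list \<Rightarrow> 'a set set" where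
  "cycle_edges cs = {{cs ! i, cs ! ((i + 1) mod length cs)} | i. i < length cs}"

definition is_bridge :: "'a set \<Rightarrow> 'a set set \<Rightarrow> 'a set \<Rightarrow> bool" where
  "is_bridge V E e \<longleftrightarrow> e \<in> E \<and> \<not> (\<exists>cs. is_cycle V E cs \<and> e \<in> cycle_edges cs)"

definition bridgeless :: "'a set \<Rightarrow> 'a set set \<Rightarrow> bool" where
  "bridgeless V E \<longleftrightarrow> (\<forall>e\<in>E. \<not> is_bridge V E e)"

definition chordal :: "'a set \<Rightarrow> 'a set set \<Rightarrow> bool" where
  "chordal V E \<longleftrightarrow> \<not> (\<exists>cs. is_cycle V E cs \<and> length cs \<ge> 4 \<and>
      (\<forall>x\<in>set cs. \<forall>y\<in>set cs. {x, y} \<in> E \<longrightarrow> {x, y} \<in> cycle_edges cs))"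

text \<open>One minor operation: edge deletion, vertex deletion, or contraction of an edge {u,v}
  (the merged vertex keeps the name u; multiple edges are identified automatically).\<close>

inductive minor_step :: "'a set \<times> 'a set set \<Rightarrow> 'a set \<times> 'a set set \<Rightarrow> bool" where
  del_edge: "e \<in> E \<Longrightarrow> minor_step (V, E) (V, E - {e})"
| del_vertex: "v \<in> V \<Longrightarrow> minor_step (V, E) (V - {v}, {e \<in> E. v \<notin> e})"
| contract: "{u, v} \<in> E \<Longrightarrow> u \<noteq> v \<Longrightarrow>
    minor_step (V, E) (V - {v}, {e \<in> E. v \<notin> e} \<union> {{u, w} | w. {v, w} \<in> E \<and> w \<noteq> u})"

definition is_minor :: "'a set \<times> 'a set set \<Rightarrow> 'a set \<times> 'a set set \<Rightarrow> bool" where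
  "is_minor H G \<longleftrightarrow> minor_step\<^sup>*\<^sup>* G H"

definition complete_graph :: "'a set \<Rightarrow> 'a set set \<Rightarrow> bool" where
  "complete_graph V E \<longleftrightarrow> E = {{u, v} | u v. u \<in> V \<and> v \<in> V \<and> u \<noteq> v}"

definition has_K_minor :: "nat \<Rightarrow> 'a set \<Rightarrow> 'a set set \<Rightarrow> bool" where
  "has_K_minor n V E \<longleftrightarrow> (\<exists>V' E'. is_minor (V', E') (V, E) \<and> finite V' \<and> card V' = n \<and>
      complete_graph V' E')"

definition is_clique :: "'a set \<Rightarrow> 'a set set \<Rightarrow> 'a set \<Rightarrow> bool" where
  "is_clique V E S \<longleftrightarrow> S \<subseteq> V \<and> (\<forall>u\<in>S. \<forall>v\<in>S. u \<noteq> v \<longrightarrow> {u, v} \<in> E)"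

text \<open>Graphs obtained from copies of K3 and K4 by successive 0-, 1- and 2-sums
  (a k-sum glues along a common clique of size k+1).\<close>

inductive k34_sum :: "'a set \<Rightarrow> 'a set set \<Rightarrow> bool" where
  base: "finite V \<Longrightarrow> card V \<in> {3, 4} \<Longrightarrow> complete_graph V E \<Longrightarrow> k34_sum V E"
| csum: "k34_sum V1 E1 \<Longrightarrow> k34_sum V2 E2 \<Longrightarrow>
    is_clique V1 E1 (V1 \<inter> V2) \<Longrightarrow> is_clique V2 E2 (V1 \<inter> V2) \<Longrightarrow>
    card (V1 \<inter> V2) \<in> {1, 2, 3} \<Longrightarrow> k34_sum (V1 \<union> V2) (E1 \<union> E2)"

end

theory Submission
  imports Defs "HOL-Number_Theory.Cong"
begin

text \<open>
  Gluing copies of \<open>K\<^sub>3\<close> and \<open>K\<^sub>4\<close> along cliques preserves the three properties: every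
  edge lies in a triangle, a chordless cycle cannot pass through both sides of a clique
  separator, and a \<open>K\<^sub>5\<close> minor of a clique sum, read as five connected branch sets, restricts
  to one of the two sides.

  Conversely, a complete graph with these properties is \<open>K\<^sub>3\<close> or \<open>K\<^sub>4\<close>: a single edge would be a
  bridge and \<open>K\<^sub>5\<close> is excluded. Otherwise take a minimal separator \<open>S\<close> of two non-adjacent
  vertices \<open>a\<close>, \<open>b\<close>. As in Dirac's theorem on chordal graphs \<open>S\<close> is a clique, and every vertex of
  \<open>S\<close> has a neighbour in the component \<open>A\<close> of \<open>a\<close>, so contracting \<open>A\<close> onto \<open>S\<close> shows \<open>|S| \<le> 3\<close>.
  The graph is the clique sum of \<open>G[A \<union> S]\<close> and \<open>G[V - A]\<close>; both pieces are again chordal,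
  connected and free of \<open>K\<^sub>5\<close> minors, and bridgeless because in a bridgeless chordal graph every
  edge lies in a triangle, and a triangle leaving a piece can be rerouted through a component.
\<close>

definition edges_within :: "'a set \<Rightarrow> 'a set set \<Rightarrow> bool" where
  "edges_within V E \<longleftrightarrow> (\<forall>e\<in>E. \<exists>u v. u \<in> V \<and> v \<in> V \<and> u \<noteq> v \<and> e = {u, v})"

lemma edges_withinD: "edges_within V E \<Longrightarrow> {x, y} \<in> E \<Longrightarrow> x \<in> V \<and> y \<in> V \<and> x \<noteq> y"
  unfolding edges_within_def by (metis doubleton_eq_iff)

lemma simple_graph_edges_within: "simple_graph V E \<Longrightarrow> edges_within V E"
  unfolding simple_graph_def edges_within_def by blast

lemma simple_graph_finite: "simple_graph V E \<Longrightarrow> finite V"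
  unfolding simple_graph_def by blast

lemma simple_graph_edgeE:
  assumes "simple_graph V E" "e \<in> E"
  obtains u v where "u \<in> V" "v \<in> V" "u \<noteq> v" "e = {u, v}"
  using assms unfolding simple_graph_def by blast

lemma simple_graph_iff_edges_within: "simple_graph V E \<longleftrightarrow> finite V \<and> edges_within V E"
  unfolding simple_graph_def edges_within_def by blast

definition adj_on :: "'a set set \<Rightarrow> 'a set \<Rightarrow> ('a \<times> 'a) set" where
  "adj_on E B = {(x, y). {x, y} \<in> E \<and> x \<in> B \<and> y \<in> B}"

definition connected_on :: "'a set set \<Rightarrow> 'a set \<Rightarrow> bool" where
  "connected_on E B \<longleftrightarrow> (\<forall>x\<in>B. \<forall>y\<in>B. (x, y) \<in> (adj_on E B)\<^sup>*)"

lemma sym_adj: "sym {(x, y). {x, y} \<in> E}"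
  unfolding sym_def by (auto simp: insert_commute)

lemma sym_adj_on: "sym (adj_on E B)"
  unfolding adj_on_def sym_def by (auto simp: insert_commute)

lemma adj_on_mono: "E \<subseteq> E' \<Longrightarrow> B \<subseteq> B' \<Longrightarrow> adj_on E B \<subseteq> adj_on E' B'"
  unfolding adj_on_def by auto

lemma connected_onD: "connected_on E B \<Longrightarrow> x \<in> B \<Longrightarrow> y \<in> B \<Longrightarrow> (x, y) \<in> (adj_on E B)\<^sup>*"
  unfolding connected_on_def by blast

lemma connected_on_mono: "connected_on E B \<Longrightarrow> E \<subseteq> E' \<Longrightarrow> connected_on E' B"
  unfolding connected_on_def by (meson adj_on_mono order_refl rtrancl_mono subsetD)

lemma connected_on_singleton: "connected_on E {x}"
  unfolding connected_on_def by simp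

section \<open>Minors and clique models\<close>

text \<open>\<open>B 0, \<dots>, B (n - 1)\<close> are the branch sets of a \<open>K\<^sub>n\<close> minor.\<close>

definition clique_model :: "nat \<Rightarrow> 'a set \<Rightarrow> 'a set set \<Rightarrow> (nat \<Rightarrow> 'a set) \<Rightarrow> bool" where
  "clique_model n V E B \<longleftrightarrow> (\<forall>i<n. B i \<noteq> {} \<and> B i \<subseteq> V \<and> connected_on E (B i)) \<and>
     (\<forall>i<n. \<forall>j<n. i \<noteq> j \<longrightarrow> B i \<inter> B j = {} \<and> (\<exists>x\<in>B i. \<exists>y\<in>B j. {x, y} \<in> E))"

lemma clique_model_mono:
  "clique_model n V' E' B \<Longrightarrow> V' \<subseteq> V \<Longrightarrow> E' \<subseteq> E \<Longrightarrow> clique_model n V E B"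
  unfolding clique_model_def by (meson connected_on_mono order_trans subsetD)

definition contract_edges :: "'a set set \<Rightarrow> 'a \<Rightarrow> 'a \<Rightarrow> 'a set set" where
  "contract_edges E u v = {e \<in> E. v \<notin> e} \<union> {{u, w} | w. {v, w} \<in> E \<and> w \<noteq> u}"

lemma minor_step_contract:
  "{u, v} \<in> E \<Longrightarrow> u \<noteq> v \<Longrightarrow> minor_step (V, E) (V - {v}, contract_edges E u v)"
  unfolding contract_edges_def by (rule minor_step.contract)

lemma contract_edgesE:
  assumes "{x, y} \<in> contract_edges E u v"
  obtains "{x, y} \<in> E" | w where "{x, y} = {u, w}" "{v, w} \<in> E" "w \<noteq> u"
  using assms unfolding contract_edges_def by blast

lemma minor_step_edges_within:
  assumes "minor_step G G'" "edges_within (fst G) (snd G)"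
  shows "edges_within (fst G') (snd G')"
  using assms
proof (induction rule: minor_step.induct)
  case (contract u v E V)
  then have E: "edges_within V E" by simp
  have "u \<in> V" using edges_withinD[OF E contract(1)] by blast
  have "\<exists>x y. x \<in> V - {v} \<and> y \<in> V - {v} \<and> x \<noteq> y \<and> e = {x, y}"
    if "e \<in> contract_edges E u v" for e
    using that unfolding contract_edges_def
  proof (elim UnE CollectE exE conjE)
    fix w assume "e = {u, w}" "{v, w} \<in> E" "w \<noteq> u"
    then show ?thesis using edges_withinD[OF E] contract(2) \<open>u \<in> V\<close> by blast
  qed (use E in \<open>fastforce simp: edges_within_def\<close>)
  then show ?case unfolding edges_within_def contract_edges_def by simp
qed (fastforce simp: edges_within_def)+

lemma connected_on_uncontract:
  assumes uv: "{u, v} \<in> E" and B: "v \<notin> B" and conn: "connected_on (contract_edges E u v) B"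
  shows "connected_on E (if u \<in> B then insert v B else B)" (is "connected_on E ?B")
proof -
  have step: "(x, y) \<in> (adj_on E ?B)\<^sup>*" if "(x, y) \<in> adj_on (contract_edges E u v) B" for x y
  proof -
    from that have xy: "{x, y} \<in> contract_edges E u v" "x \<in> B" "y \<in> B"
      unfolding adj_on_def by auto
    then show ?thesis
    proof (cases rule: contract_edgesE)
      case 1
      then show ?thesis using xy unfolding adj_on_def by auto
    next
      case (2 w)
      then consider "x = u" "y = w" | "x = w" "y = u" by (metis doubleton_eq_iff)
      then have "u \<in> B \<and> {x, v} \<in> E \<and> {v, y} \<in> E"
        using uv xy 2 by cases (simp_all add: insert_commute)
      then have "(x, v) \<in> adj_on E ?B" "(v, y) \<in> adj_on E ?B"
        using xy unfolding adj_on_def by auto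
      then show ?thesis by (meson r_into_rtrancl rtrancl_trans)
    qed
  qed
  have "(adj_on (contract_edges E u v) B)\<^sup>* \<subseteq> (adj_on E ?B)\<^sup>*"
    by (rule rtrancl_subset_rtrancl) (use step in auto)
  then have reach: "(x, y) \<in> (adj_on E ?B)\<^sup>*" if "x \<in> B" "y \<in> B" for x y
    using connected_onD[OF conn that] by blast
  show ?thesis
  proof (cases "u \<in> B")
    case True
    then have "(v, u) \<in> adj_on E ?B" "(u, v) \<in> adj_on E ?B"
      using uv unfolding adj_on_def by (auto simp: insert_commute)
    then have hub: "(z, u) \<in> (adj_on E ?B)\<^sup>* \<and> (u, z) \<in> (adj_on E ?B)\<^sup>*" if "z \<in> ?B" for z
    proof (cases "z = v")
      case False
      then have "z \<in> B" using that True by simp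
      then show ?thesis using reach True by blast
    qed auto
    show ?thesis unfolding connected_on_def
    proof (intro ballI)
      fix x y assume "x \<in> ?B" "y \<in> ?B"
      then show "(x, y) \<in> (adj_on E ?B)\<^sup>*"
        using hub rtrancl_trans[of x u _ y] by blast
    qed
  next
    case False
    then show ?thesis using reach unfolding connected_on_def by simp
  qed
qed

lemma minor_step_clique_model:
  assumes "minor_step G G'" "edges_within (fst G) (snd G)" "clique_model n (fst G') (snd G') B"
  shows "\<exists>B'. clique_model n (fst G) (snd G) B'"
  using assms
proof (induction rule: minor_step.induct)
  case (del_edge e E V)
  then show ?case using clique_model_mono[of n V "E - {e}" B V E] by auto
next
  case (del_vertex v V E)
  then show ?case using clique_model_mono[of n "V - {v}" "{e \<in> E. v \<notin> e}" B V E] by auto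
next
  case (contract u v E V)
  let ?E' = "contract_edges E u v"
  have B: "\<forall>i<n. B i \<noteq> {} \<and> B i \<subseteq> V - {v} \<and> connected_on ?E' (B i)"
    "\<forall>i<n. \<forall>j<n. i \<noteq> j \<longrightarrow> B i \<inter> B j = {} \<and> (\<exists>x\<in>B i. \<exists>y\<in>B j. {x, y} \<in> ?E')"
  proof -
    have "clique_model n (V - {v}) ?E' B" using contract.prems(2) by (simp add: contract_edges_def)
    then show "\<forall>i<n. B i \<noteq> {} \<and> B i \<subseteq> V - {v} \<and> connected_on ?E' (B i)"
      "\<forall>i<n. \<forall>j<n. i \<noteq> j \<longrightarrow> B i \<inter> B j = {} \<and> (\<exists>x\<in>B i. \<exists>y\<in>B j. {x, y} \<in> ?E')"
      unfolding clique_model_def by blast+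
  qed
  have "u \<in> V" "v \<in> V" using contract edges_withinD by fastforce+
  define B' where "B' i = (if u \<in> B i then insert v (B i) else B i)" for i
  have "clique_model n V E B'"
    unfolding clique_model_def
  proof (intro conjI allI impI)
    fix i assume i: "i < n"
    then show "B' i \<noteq> {}" "B' i \<subseteq> V" using B(1) \<open>u \<in> V\<close> \<open>v \<in> V\<close> unfolding B'_def by auto
    show "connected_on E (B' i)"
      unfolding B'_def using connected_on_uncontract[OF contract.hyps(1)] B(1) i by blast
    fix j assume j: "j < n" "i \<noteq> j"
    have "B i \<inter> B j = {}" using B(2) i j by blast
    then show "B' i \<inter> B' j = {}" using B(1) i j unfolding B'_def by auto
    obtain x y where xy: "x \<in> B i" "y \<in> B j" "{x, y} \<in> ?E'" using B(2) i j by blast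
    from xy(3) show "\<exists>x\<in>B' i. \<exists>y\<in>B' j. {x, y} \<in> E"
    proof (cases rule: contract_edgesE)
      case 1
      then show ?thesis using xy unfolding B'_def by auto
    next
      case (2 w)
      then consider "x = u" "y = w" | "x = w" "y = u" by (metis doubleton_eq_iff)
      then show ?thesis using xy 2 unfolding B'_def by cases (auto simp: insert_commute)
    qed
  qed
  then show ?case by (intro exI[of _ B']) simp
qed

lemma minor_clique_model:
  assumes "minor_step\<^sup>*\<^sup>* G H" "edges_within (fst G) (snd G)" "clique_model n (fst H) (snd H) B"
  shows "\<exists>B'. clique_model n (fst G) (snd G) B'"
  using assms
proof (induction arbitrary: B rule: converse_rtranclp_induct)
  case (step G G')
  then show ?case using minor_step_edges_within minor_step_clique_model by blast
qed blast

lemma complete_graph_clique_model: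
  assumes "finite V" "card V = n" "complete_graph V E"
  shows "\<exists>B. clique_model n V E B"
proof -
  obtain xs where xs: "set xs = V" "distinct xs" using finite_distinct_list[OF assms(1)] by auto
  have len: "length xs = n" using xs assms(2) distinct_card by fastforce
  have "clique_model n V E (\<lambda>i. {xs ! i})"
    unfolding clique_model_def
  proof (intro conjI allI impI)
    fix i j assume ij: "i < n" "j < n" "i \<noteq> j"
    then have "xs ! i \<noteq> xs ! j" "xs ! i \<in> V" "xs ! j \<in> V"
      using xs len by (auto simp: nth_eq_iff_index_eq)
    then show "{xs ! i} \<inter> {xs ! j} = {}" "\<exists>x\<in>{xs ! i}. \<exists>y\<in>{xs ! j}. {x, y} \<in> E"
      using assms(3) unfolding complete_graph_def by blast+
  qed (use xs len connected_on_singleton in auto)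
  then show ?thesis by blast
qed

lemma has_K_minor_clique_model:
  assumes "simple_graph V E" "has_K_minor n V E"
  shows "\<exists>B. clique_model n V E B"
proof -
  obtain V' E' where minor: "minor_step\<^sup>*\<^sup>* (V, E) (V', E')"
    and K: "finite V'" "card V' = n" "complete_graph V' E'"
    using assms(2) unfolding has_K_minor_def is_minor_def by auto
  obtain B where "clique_model n V' E' B" using complete_graph_clique_model[OF K] by blast
  then show ?thesis
    using minor_clique_model[OF minor] simple_graph_edges_within[OF assms(1)] by simp
qed

section \<open>Chordless cycles\<close>

definition chordless :: "'a set set \<Rightarrow> 'a list \<Rightarrow> bool" where
  "chordless E cs \<longleftrightarrow> (\<forall>x\<in>set cs. \<forall>y\<in>set cs. {x, y} \<in> E \<longrightarrow> {x, y} \<in> cycle_edges cs)"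

lemma chordal_iff: "chordal V E \<longleftrightarrow> \<not> (\<exists>cs. is_cycle V E cs \<and> 4 \<le> length cs \<and> chordless E cs)"
  unfolding chordal_def chordless_def by simp

lemma chordalD:
  assumes "chordal V E" "is_cycle V E cs" "chordless E cs" shows "length cs \<le> 3"
proof (rule ccontr)
  assume "\<not> length cs \<le> 3"
  then have "4 \<le> length cs" by simp
  with assms show False unfolding chordal_iff by blast
qed

definition cyc_at :: "'a list \<Rightarrow> nat \<Rightarrow> nat \<Rightarrow> 'a" where
  "cyc_at cs i k = cs ! ((i + k) mod length cs)"

lemma is_cycle_length: "is_cycle V E cs \<Longrightarrow> 3 \<le> length cs"
  unfolding is_cycle_def by blast

lemma cyc_at_edge: "is_cycle V E cs \<Longrightarrow> {cyc_at cs i k, cyc_at cs i (Suc k)} \<in> E"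
  unfolding is_cycle_def cyc_at_def by (metis mod_Suc_eq Suc_eq_plus1 add_Suc_right le_zero_eq
      mod_less_divisor not_gr_zero numeral_3_eq_3 zero_neq_numeral)

lemma cyc_at_in_set:
  assumes "is_cycle V E cs" shows "cyc_at cs i k \<in> set cs"
proof -
  have "0 < length cs" using is_cycle_length[OF assms] by linarith
  then show ?thesis unfolding cyc_at_def by simp
qed

lemma cyc_at_in_vertices:
  assumes "is_cycle V E cs" shows "cyc_at cs i k \<in> V"
  using cyc_at_in_set[OF assms] assms unfolding is_cycle_def by blast

lemma cyc_at_eq_iff:
  assumes "is_cycle V E cs" "k < length cs" "k' < length cs"
  shows "cyc_at cs i k = cyc_at cs i k' \<longleftrightarrow> k = k'"
proof
  assume "cyc_at cs i k = cyc_at cs i k'"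
  moreover have "distinct cs" "0 < length cs" using assms(1) unfolding is_cycle_def by auto
  ultimately have "(i + k) mod length cs = (i + k') mod length cs"
    unfolding cyc_at_def by (simp add: nth_eq_iff_index_eq)
  then have "k mod length cs = k' mod length cs"
    using cong_add_lcancel_nat unfolding cong_def by blast
  then show "k = k'" using assms(2,3) by simp
qed simp

lemma cyc_at_length: "cyc_at cs i (length cs) = cyc_at cs i 0"
  unfolding cyc_at_def by simp

lemma cyc_at_0: "i < length cs \<Longrightarrow> cyc_at cs i 0 = cs ! i"
  unfolding cyc_at_def by simp

lemma cyc_at_nth:
  assumes "i < length cs" "j < length cs"
  shows "cyc_at cs i ((j + length cs - i) mod length cs) = cs ! j"
proof -
  have "(i + (j + length cs - i) mod length cs) mod length cs = (j + length cs) mod length cs"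
    using assms by (simp add: mod_add_right_eq)
  then show ?thesis using assms unfolding cyc_at_def by simp
qed

lemma chordless_cyc_at_adjacent:
  assumes c: "is_cycle V E cs" and ch: "chordless E cs" and k: "k < length cs" "k' < length cs"
    and e: "{cyc_at cs i k, cyc_at cs i k'} \<in> E"
  shows "k' = Suc k mod length cs \<or> k = Suc k' mod length cs"
proof -
  let ?n = "length cs"
  have n: "0 < ?n" "distinct cs" using c unfolding is_cycle_def by auto
  have "{cyc_at cs i k, cyc_at cs i k'} \<in> cycle_edges cs"
    using ch e cyc_at_in_set[OF c] unfolding chordless_def by blast
  then obtain j where j: "j < ?n" "{cyc_at cs i k, cyc_at cs i k'} = {cs ! j, cs ! ((j + 1) mod ?n)}"
    unfolding cycle_edges_def by blast
  let ?i = "(i + k) mod ?n" and ?i' = "(i + k') mod ?n"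
  have "(cs ! ?i = cs ! j \<and> cs ! ?i' = cs ! ((j + 1) mod ?n)) \<or>
        (cs ! ?i = cs ! ((j + 1) mod ?n) \<and> cs ! ?i' = cs ! j)"
    using j(2) unfolding cyc_at_def by (metis doubleton_eq_iff)
  then have "(?i = j \<and> ?i' = (j + 1) mod ?n) \<or> (?i = (j + 1) mod ?n \<and> ?i' = j)"
    using j(1) n by (simp add: nth_eq_iff_index_eq)
  then have "?i' = (i + Suc k) mod ?n \<or> ?i = (i + Suc k') mod ?n"
    by (metis add_Suc_right mod_Suc_eq Suc_eq_plus1)
  then have "k' mod ?n = Suc k mod ?n \<or> k mod ?n = Suc k' mod ?n"
    using cong_add_lcancel_nat unfolding cong_def by blast
  then show ?thesis using k by simp
qed

lemma nat_predicate_switch: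
  assumes "P i" "\<not> P j" "i \<le> j"
  obtains k where "i \<le> k" "k < j" "P k" "\<not> P (Suc k)"
  using assms(3,2)
proof (induction j rule: dec_induct)
  case base
  then show ?case using assms(1) by simp
next
  case (step j)
  then show ?case by (cases "P (Suc j)") (auto intro: that)
qed

section \<open>Clique sums\<close>

locale clique_sum =
  fixes V1 :: "'a set" and E1 :: "'a set set" and V2 :: "'a set" and E2 :: "'a set set"
  assumes edges1: "edges_within V1 E1" and edges2: "edges_within V2 E2"
    and clique1: "is_clique V1 E1 (V1 \<inter> V2)" and clique2: "is_clique V2 E2 (V1 \<inter> V2)"
begin

lemma swap: "clique_sum V2 E2 V1 E1"
  using edges1 edges2 clique1 clique2 by unfold_locales (simp_all add: Int_commute)

lemma separator_adjacent: "s \<in> V1 \<inter> V2 \<Longrightarrow> t \<in> V1 \<inter> V2 \<Longrightarrow> s \<noteq> t \<Longrightarrow> {s, t} \<in> E1"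
  using clique1 unfolding is_clique_def by blast

lemma boundary_edge: "{x, y} \<in> E1 \<union> E2 \<Longrightarrow> x \<in> V1 \<Longrightarrow> y \<notin> V1 \<Longrightarrow> x \<in> V1 \<inter> V2"
  using edges_withinD[OF edges1] edges_withinD[OF edges2] by blast

lemma edge_inside: "{x, y} \<in> E1 \<union> E2 \<Longrightarrow> x \<in> V1 \<Longrightarrow> y \<in> V1 \<Longrightarrow> {x, y} \<in> E1"
  using edges_withinD[OF edges2] separator_adjacent by blast

lemma chordless_cycle_inside:
  assumes c: "is_cycle (V1 \<union> V2) (E1 \<union> E2) cs" and ch: "chordless (E1 \<union> E2) cs"
    and sub: "set cs \<subseteq> V1"
  shows "is_cycle V1 E1 cs \<and> chordless E1 cs"
proof -
  have "{cs ! i, cs ! ((i + 1) mod length cs)} \<in> E1" if "i < length cs" for i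
  proof -
    have "0 < length cs" using that by linarith
    then have "cs ! i \<in> V1" "cs ! ((i + 1) mod length cs) \<in> V1" using sub that by auto
    moreover have "{cs ! i, cs ! ((i + 1) mod length cs)} \<in> E1 \<union> E2"
      using c that unfolding is_cycle_def by blast
    ultimately show ?thesis using edge_inside by blast
  qed
  then have "is_cycle V1 E1 cs" using c sub unfolding is_cycle_def by blast
  moreover have "chordless E1 cs" using ch unfolding chordless_def by blast
  ultimately show ?thesis ..
qed

text \<open>
  A chordless cycle passing through both sides would have to enter and leave \<open>V\<^sub>1\<close>
  through two non-consecutive vertices of the clique \<open>V\<^sub>1 \<inter> V\<^sub>2\<close>, which are adjacent.\<close>

lemma chordless_cycle_one_side:
  assumes c: "is_cycle (V1 \<union> V2) (E1 \<union> E2) cs" and ch: "chordless (E1 \<union> E2) cs"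
  shows "set cs \<subseteq> V1 \<or> set cs \<subseteq> V2"
proof (rule ccontr)
  assume "\<not> (set cs \<subseteq> V1 \<or> set cs \<subseteq> V2)"
  then obtain a b where a: "a \<in> set cs" "a \<notin> V1" and b: "b \<in> set cs" "b \<notin> V2" by blast
  let ?n = "length cs"
  obtain i where i: "i < ?n" "cs ! i = a" using a(1) by (metis in_set_conv_nth)
  obtain j where j: "j < ?n" "cs ! j = b" using b(1) by (metis in_set_conv_nth)
  define c where "c = cyc_at cs i"
  define kb where "kb = (j + ?n - i) mod ?n"
  have c0: "c 0 = a" and cn: "c ?n = a" using i cyc_at_0 cyc_at_length unfolding c_def by metis+
  have ckb: "c kb = b" using cyc_at_nth[OF i(1) j(1)] j(2) unfolding c_def kb_def by simp
  have "0 < ?n" using i(1) by linarith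
  then have kbn: "kb < ?n" unfolding kb_def by (rule mod_less_divisor)
  have cE: "{c k, c (Suc k)} \<in> E1 \<union> E2" for k unfolding c_def by (rule cyc_at_edge[OF c])
  have bV1: "c kb \<in> V1" using cyc_at_in_vertices[OF c] b(2) ckb unfolding c_def by blast
  then have "0 < kb" using c0 a(2) by (metis gr0I)
  obtain k1 where k1: "k1 < kb" "c k1 \<notin> V1" "c (Suc k1) \<in> V1"
    using nat_predicate_switch[of "\<lambda>k. c k \<notin> V1" 0 kb] c0 a(2) bV1 by auto
  have "{c (Suc k1), c k1} \<in> E1 \<union> E2" using cE[of k1] by (simp add: insert_commute)
  then have k1S: "c (Suc k1) \<in> V1 \<inter> V2" using boundary_edge k1 by blast
  then have k1b: "Suc k1 < kb" using k1(1) ckb b(2) by (metis IntD2 Suc_leI le_neq_implies_less)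
  obtain k2 where k2: "kb \<le> k2" "k2 < ?n" "c k2 \<in> V1" "c (Suc k2) \<notin> V1"
    using nat_predicate_switch[of "\<lambda>k. c k \<in> V1" kb ?n] bV1 cn a(2) kbn by auto
  then have k2S: "c k2 \<in> V1 \<inter> V2" using boundary_edge cE by blast
  then have k2b: "kb < k2" using k2(1) ckb b(2) by (metis IntD2 le_neq_implies_less)
  have "c (Suc k1) \<noteq> c k2"
    using cyc_at_eq_iff[OF c, of "Suc k1" k2] k1b k2b kbn k2(2) unfolding c_def by simp
  then have "{cyc_at cs i (Suc k1), cyc_at cs i k2} \<in> E1 \<union> E2"
    using separator_adjacent k1S k2S unfolding c_def by blast
  moreover have "Suc k1 < ?n" using k1b kbn by linarith
  ultimately have "k2 = Suc (Suc k1) mod ?n \<or> Suc k1 = Suc k2 mod ?n"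
    using chordless_cyc_at_adjacent[OF c ch, of "Suc k1" k2] k2(2) by blast
  moreover have "Suc (Suc k1) mod ?n = Suc (Suc k1)" using k1b kbn by simp
  moreover have "Suc k2 mod ?n = (if Suc k2 = ?n then 0 else Suc k2)" using k2(2) by simp
  ultimately show False using k1b k2b by (auto split: if_splits)
qed

lemma chordal:
  assumes "chordal V1 E1" "chordal V2 E2"
  shows "chordal (V1 \<union> V2) (E1 \<union> E2)"
  unfolding chordal_iff
proof (intro notI, elim exE conjE)
  fix cs assume c: "is_cycle (V1 \<union> V2) (E1 \<union> E2) cs" "4 \<le> length cs" "chordless (E1 \<union> E2) cs"
  from chordless_cycle_one_side[OF c(1,3)] show False
  proof
    assume "set cs \<subseteq> V1"
    then show False using chordless_cycle_inside c chordalD[OF assms(1)] by fastforce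
  next
    assume "set cs \<subseteq> V2"
    moreover have "is_cycle (V2 \<union> V1) (E2 \<union> E1) cs" "chordless (E2 \<union> E1) cs"
      using c by (simp_all add: Un_commute)
    ultimately show False
      using clique_sum.chordless_cycle_inside[OF swap] c chordalD[OF assms(2)] by fastforce
  qed
qed

end

context clique_sum
begin

text \<open>A walk in \<open>B\<close> starting in \<open>V\<^sub>1\<close> can be shadowed inside \<open>B \<inter> V\<^sub>1\<close>: an excursion into
  \<open>V\<^sub>2 - V\<^sub>1\<close> leaves and re-enters through the clique \<open>V\<^sub>1 \<inter> V\<^sub>2\<close>.\<close>

lemma adj_on_rtrancl_restrict:
  assumes x: "x \<in> B \<inter> V1" and p: "(x, z) \<in> (adj_on (E1 \<union> E2) B)\<^sup>*"
  shows "(z \<in> V1 \<and> (x, z) \<in> (adj_on E1 (B \<inter> V1))\<^sup>*) \<or>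
         (z \<notin> V1 \<and> (\<exists>s\<in>B \<inter> V1 \<inter> V2. (x, s) \<in> (adj_on E1 (B \<inter> V1))\<^sup>*))"
  using p
proof (induction rule: rtrancl_induct)
  case base
  then show ?case using x by simp
next
  case (step z z')
  let ?R = "adj_on E1 (B \<inter> V1)"
  have e: "{z, z'} \<in> E1 \<union> E2" "z \<in> B" "z' \<in> B" using step(2) unfolding adj_on_def by auto
  have sep: "(s, t) \<in> ?R\<^sup>*" if "s \<in> B \<inter> V1 \<inter> V2" "t \<in> B \<inter> V1 \<inter> V2" for s t
  proof (cases "s = t")
    case False
    then have "(s, t) \<in> ?R" using separator_adjacent that unfolding adj_on_def by blast
    then show ?thesis by blast
  qed simp
  from step(3) show ?case
  proof
    assume A: "z \<in> V1 \<and> (x, z) \<in> ?R\<^sup>*"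
    show ?thesis
    proof (cases "z' \<in> V1")
      case True
      then have "(z, z') \<in> ?R" using A e edge_inside unfolding adj_on_def by blast
      then show ?thesis using A True by (meson rtrancl.rtrancl_into_rtrancl)
    next
      case False
      then show ?thesis using A e boundary_edge by blast
    qed
  next
    assume A: "z \<notin> V1 \<and> (\<exists>s\<in>B \<inter> V1 \<inter> V2. (x, s) \<in> ?R\<^sup>*)"
    then obtain s where s: "s \<in> B \<inter> V1 \<inter> V2" "(x, s) \<in> ?R\<^sup>*" by blast
    show ?thesis
    proof (cases "z' \<in> V1")
      case True
      have "{z', z} \<in> E1 \<union> E2" using e(1) by (simp add: insert_commute)
      then have "z' \<in> V1 \<inter> V2" using boundary_edge True A by blast
      then have "(s, z') \<in> ?R\<^sup>*" using sep s e by blast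
      then show ?thesis using s True by (meson rtrancl_trans)
    next
      case False
      then show ?thesis using s by blast
    qed
  qed
qed

lemma connected_on_restrict:
  assumes "connected_on (E1 \<union> E2) B" shows "connected_on E1 (B \<inter> V1)"
  unfolding connected_on_def
proof (intro ballI)
  fix x y assume xy: "x \<in> B \<inter> V1" "y \<in> B \<inter> V1"
  then show "(x, y) \<in> (adj_on E1 (B \<inter> V1))\<^sup>*"
    using adj_on_rtrancl_restrict[of x B y] connected_onD[OF assms] by blast
qed

lemma connected_meets_separator:
  assumes "connected_on (E1 \<union> E2) B" "x \<in> B \<inter> V1" "z \<in> B \<inter> V2"
  shows "B \<inter> V1 \<inter> V2 \<noteq> {}"
  using adj_on_rtrancl_restrict[of x B z] connected_onD[OF assms(1)] assms(2,3) by blast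

lemma clique_model_restrict:
  assumes B: "clique_model n (V1 \<union> V2) (E1 \<union> E2) B" and meet: "\<forall>i<n. B i \<inter> V1 \<noteq> {}"
  shows "clique_model n V1 E1 (\<lambda>i. B i \<inter> V1)"
  unfolding clique_model_def
proof (intro conjI allI impI)
  fix i assume i: "i < n"
  then show "B i \<inter> V1 \<noteq> {}" "B i \<inter> V1 \<subseteq> V1" using meet by auto
  have conn: "connected_on (E1 \<union> E2) (B k)" if "k < n" for k
    using B that unfolding clique_model_def by blast
  show "connected_on E1 (B i \<inter> V1)" using connected_on_restrict[OF conn[OF i]] .
  have sep: "B k \<inter> V1 \<inter> V2 \<noteq> {}" if "k < n" "z \<in> B k \<inter> V2" for k z
    using connected_meets_separator[OF conn[OF that(1)] _ that(2)] meet that(1) by blast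
  fix j assume j: "j < n" "i \<noteq> j"
  have disj: "B i \<inter> B j = {}" and "\<exists>x\<in>B i. \<exists>y\<in>B j. {x, y} \<in> E1 \<union> E2"
    using B i j unfolding clique_model_def by blast+
  then obtain x y where xy: "x \<in> B i" "y \<in> B j" "{x, y} \<in> E1 \<union> E2" by blast
  show "B i \<inter> V1 \<inter> (B j \<inter> V1) = {}" using disj by blast
  show "\<exists>x\<in>B i \<inter> V1. \<exists>y\<in>B j \<inter> V1. {x, y} \<in> E1"
  proof (cases "x \<in> V1 \<and> y \<in> V1")
    case True
    then show ?thesis using xy edge_inside by blast
  next
    case False
    then have "x \<in> V2" "y \<in> V2" using xy(3) edges_withinD[OF edges1] edges_withinD[OF edges2] by blast+
    then obtain s t where "s \<in> B i \<inter> V1 \<inter> V2" "t \<in> B j \<inter> V1 \<inter> V2"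
      using sep[OF i] sep[OF j(1)] xy(1,2) by blast
    moreover have "s \<noteq> t" using calculation disj by blast
    ultimately show ?thesis using separator_adjacent by blast
  qed
qed

lemma clique_model_side:
  assumes B: "clique_model n (V1 \<union> V2) (E1 \<union> E2) B"
  shows "(\<exists>B'. clique_model n V1 E1 B') \<or> (\<exists>B'. clique_model n V2 E2 B')"
proof (cases "\<forall>i<n. B i \<inter> V1 \<noteq> {}")
  case True
  then show ?thesis using clique_model_restrict[OF B] by blast
next
  case False
  then obtain i where i: "i < n" "B i \<inter> V1 = {}" by blast
  show ?thesis
  proof (cases "\<forall>j<n. B j \<inter> V2 \<noteq> {}")
    case True
    have "clique_model n (V2 \<union> V1) (E2 \<union> E1) B" using B by (simp add: Un_commute)
    then show ?thesis using clique_sum.clique_model_restrict[OF swap] True by blast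
  next
    case False
    then obtain j where j: "j < n" "B j \<inter> V2 = {}" by blast
    have "B i \<noteq> {}" "B i \<subseteq> V1 \<union> V2" using B i(1) unfolding clique_model_def by blast+
    then have "i \<noteq> j" using i(2) j(2) by blast
    then obtain x y where "x \<in> B i" "y \<in> B j" "{x, y} \<in> E1 \<union> E2"
      using B i(1) j(1) unfolding clique_model_def by blast
    then show ?thesis using i(2) j(2) edges_withinD[OF edges1] edges_withinD[OF edges2] by blast
  qed
qed

end

lemma clique_model_le_card:
  assumes "finite V" "clique_model n V E B" shows "n \<le> card V"
proof -
  have B: "\<And>i. i < n \<Longrightarrow> B i \<noteq> {} \<and> B i \<subseteq> V"
    "\<And>i j. i < n \<Longrightarrow> j < n \<Longrightarrow> i \<noteq> j \<Longrightarrow> B i \<inter> B j = {}"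
    using assms(2) unfolding clique_model_def by blast+
  define f where "f i = (SOME x. x \<in> B i)" for i
  have f: "f i \<in> B i" if "i < n" for i
    unfolding f_def using B(1)[OF that] by (simp add: some_in_eq)
  have "inj_on f {..<n}"
    by (rule inj_onI) (use f B(2) in \<open>fastforce\<close>)
  moreover have "f ` {..<n} \<subseteq> V" using f B(1) by blast
  ultimately show ?thesis using card_inj_on_le[OF _ _ assms(1)] by fastforce
qed

section \<open>Clique sums of \<open>K\<^sub>3\<close> and \<open>K\<^sub>4\<close>\<close>

lemma complete_graph_simple_graph: "finite V \<Longrightarrow> complete_graph V E \<Longrightarrow> simple_graph V E"
  unfolding complete_graph_def simple_graph_def by auto

lemma complete_graph_chordal:
  assumes "complete_graph V E" shows "chordal V E"
  unfolding chordal_iff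
proof (intro notI, elim exE conjE)
  fix cs assume c: "is_cycle V E cs" "4 \<le> length cs" "chordless E cs"
  have l: "0 < length cs" "2 < length cs" using c(2) by linarith+
  have "cyc_at cs 0 0 \<noteq> cyc_at cs 0 2" using cyc_at_eq_iff[OF c(1) l] by simp
  then have "{cyc_at cs 0 0, cyc_at cs 0 2} \<in> E"
    using assms cyc_at_in_vertices[OF c(1)] unfolding complete_graph_def by blast
  then have "2 = Suc 0 mod length cs \<or> 0 = Suc 2 mod length cs"
    using chordless_cyc_at_adjacent[OF c(1,3) l] by blast
  moreover have "Suc 0 mod length cs = 1" "Suc 2 mod length cs = 3" using c(2) by simp_all
  ultimately show False by simp
qed

lemma triangle_edge_on_cycle:
  assumes "simple_graph V E" "{x, y} \<in> E" "{x, z} \<in> E" "{y, z} \<in> E" "z \<noteq> x" "z \<noteq> y"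
  shows "\<exists>cs. is_cycle V E cs \<and> {x, y} \<in> cycle_edges cs"
proof -
  have v: "x \<in> V" "y \<in> V" "z \<in> V" "x \<noteq> y"
    using edges_withinD[OF simple_graph_edges_within[OF assms(1)]] assms(2,3) by blast+
  have "is_cycle V E [x, y, z]" unfolding is_cycle_def
  proof (intro conjI allI impI)
    fix i assume "i < length [x, y, z]"
    then have "i = 0 \<or> i = 1 \<or> i = 2" by auto
    then show "{[x, y, z] ! i, [x, y, z] ! ((i + 1) mod length [x, y, z])} \<in> E"
      using assms(2-4) by (auto simp: insert_commute)
  qed (use v assms(5,6) in auto)
  moreover have "{x, y} \<in> cycle_edges [x, y, z]" unfolding cycle_edges_def
    by (rule CollectI, rule exI[of _ 0]) simp
  ultimately show ?thesis by blast
qed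

lemma bridgeless_if_edges_in_triangles:
  assumes "simple_graph V E"
    and "\<And>x y. {x, y} \<in> E \<Longrightarrow> \<exists>z. {x, z} \<in> E \<and> {y, z} \<in> E \<and> z \<noteq> x \<and> z \<noteq> y"
  shows "bridgeless V E"
  unfolding bridgeless_def is_bridge_def
proof (intro ballI notI)
  fix e assume e: "e \<in> E" and nb: "e \<in> E \<and> \<not> (\<exists>cs. is_cycle V E cs \<and> e \<in> cycle_edges cs)"
  obtain x y where xy: "e = {x, y}" using simple_graph_edgeE[OF assms(1) e] by blast
  then obtain z where "{x, z} \<in> E" "{y, z} \<in> E" "z \<noteq> x" "z \<noteq> y" using assms(2) e by blast
  then show False using triangle_edge_on_cycle[OF assms(1)] e xy nb by blast
qed

lemma simple_graph_Un:
  "simple_graph V1 E1 \<Longrightarrow> simple_graph V2 E2 \<Longrightarrow> simple_graph (V1 \<union> V2) (E1 \<union> E2)"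
  unfolding simple_graph_def by (metis UnE UnI1 UnI2 finite_UnI)

lemma k34_sum_simple_graph: "k34_sum V E \<Longrightarrow> simple_graph V E"
  by (induction rule: k34_sum.induct) (simp_all add: complete_graph_simple_graph simple_graph_Un)

lemma k34_sum_clique_sum:
  assumes "k34_sum V1 E1" "k34_sum V2 E2"
    "is_clique V1 E1 (V1 \<inter> V2)" "is_clique V2 E2 (V1 \<inter> V2)"
  shows "clique_sum V1 E1 V2 E2"
  using assms k34_sum_simple_graph simple_graph_edges_within by unfold_locales blast+

lemma k34_sum_edge_in_triangle:
  "k34_sum V E \<Longrightarrow> {x, y} \<in> E \<Longrightarrow> \<exists>z. {x, z} \<in> E \<and> {y, z} \<in> E \<and> z \<noteq> x \<and> z \<noteq> y"
proof (induction arbitrary: x y rule: k34_sum.induct)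
  case (base V E)
  then have "simple_graph V E" by (simp add: complete_graph_simple_graph)
  from edges_withinD[OF simple_graph_edges_within[OF this] base(4)]
  have xy: "x \<in> V" "y \<in> V" "x \<noteq> y" by simp_all
  have "card {x, y} < card V" using xy base(2) by auto
  then have "\<not> V \<subseteq> {x, y}" using card_mono[of "{x, y}" V] by auto
  then obtain z where "z \<in> V" "z \<noteq> x" "z \<noteq> y" by blast
  then show ?case using xy base(3) unfolding complete_graph_def by blast
next
  case (csum V1 E1 V2 E2)
  from csum.prems show ?case
  proof
    assume "{x, y} \<in> E1"
    then show ?thesis using csum.IH(1) by blast
  next
    assume "{x, y} \<in> E2"
    then show ?thesis using csum.IH(2) by blast
  qed
qed

lemma k34_sum_bridgeless: "k34_sum V E \<Longrightarrow> bridgeless V E"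
  by (rule bridgeless_if_edges_in_triangles[OF k34_sum_simple_graph k34_sum_edge_in_triangle])

lemma k34_sum_chordal: "k34_sum V E \<Longrightarrow> chordal V E"
proof (induction rule: k34_sum.induct)
  case (csum V1 E1 V2 E2)
  show ?case by (rule clique_sum.chordal[OF k34_sum_clique_sum[OF csum.hyps(1-4)] csum.IH])
qed (rule complete_graph_chordal)

lemma k34_sum_clique_model_le_4: "k34_sum V E \<Longrightarrow> clique_model n V E B \<Longrightarrow> n \<le> 4"
proof (induction arbitrary: B rule: k34_sum.induct)
  case (base V E)
  then show ?case using clique_model_le_card[OF base(1) base.prems] by auto
next
  case (csum V1 E1 V2 E2)
  from clique_sum.clique_model_side[OF k34_sum_clique_sum[OF csum.hyps(1-4)] csum.prems]
  show ?case using csum.IH by blast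
qed

lemma k34_sum_no_K5_minor:
  assumes "k34_sum V E" shows "\<not> has_K_minor 5 V E"
proof
  assume "has_K_minor 5 V E"
  then obtain B where "clique_model 5 V E B"
    using has_K_minor_clique_model k34_sum_simple_graph[OF assms] by blast
  then have "(5::nat) \<le> 4" by (rule k34_sum_clique_model_le_4[OF assms])
  then show False by simp
qed

definition walk :: "('a \<times> 'a) set \<Rightarrow> (nat \<Rightarrow> 'a) \<Rightarrow> nat \<Rightarrow> bool" where
  "walk R p k \<longleftrightarrow> (\<forall>i<k. (p i, p (Suc i)) \<in> R)"

lemma walkD: "walk R p k \<Longrightarrow> i < k \<Longrightarrow> (p i, p (Suc i)) \<in> R"
  unfolding walk_def by blast

lemma walk_relpow:
  assumes "walk R p k" "a \<le> b" "b \<le> k"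
  shows "(p a, p b) \<in> R ^^ (b - a)"
proof -
  have "(p a, p (a + t)) \<in> R ^^ t" if "a + t \<le> k" for t
    using that
  proof (induction t)
    case (Suc t)
    then show ?case using walkD[OF assms(1), of "a + t"] by auto
  qed simp
  from this[of "b - a"] show ?thesis using assms by simp
qed

lemma rtrancl_shortest_walk:
  assumes "(x, y) \<in> R\<^sup>*"
  obtains p k where "p 0 = x" "p k = y" "walk R p k"
    "\<And>i j. i < j \<Longrightarrow> j \<le> k \<Longrightarrow> p i \<noteq> p j"
    "\<And>i j. Suc i < j \<Longrightarrow> j \<le> k \<Longrightarrow> (p i, p j) \<notin> R"
proof -
  obtain m where "(x, y) \<in> R ^^ m" using assms rtrancl_power by blast
  define k where "k = (LEAST m. (x, y) \<in> R ^^ m)"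
  have k: "(x, y) \<in> R ^^ k" unfolding k_def using \<open>(x, y) \<in> R ^^ m\<close> by (rule LeastI)
  have kmin: "k \<le> m'" if "(x, y) \<in> R ^^ m'" for m' unfolding k_def using that by (rule Least_le)
  obtain p where p: "p 0 = x" "p k = y" "\<forall>i<k. (p i, p (Suc i)) \<in> R"
    using k relpow_fun_conv by metis
  have w: "walk R p k" using p(3) unfolding walk_def by blast
  have ends: "(x, p i) \<in> R ^^ i" "(p j, y) \<in> R ^^ (k - j)" if "i \<le> j" "j \<le> k" for i j
    using walk_relpow[OF w, of 0 i] walk_relpow[OF w, of j k] that p(1,2) by simp_all
  have "p i \<noteq> p j" if ij: "i < j" "j \<le> k" for i j
  proof
    assume "p i = p j"
    then have "(x, y) \<in> R ^^ (i + (k - j))" using ends[of i j] ij relpow_add by fastforce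
    then show False using kmin ij by fastforce
  qed
  moreover have "(p i, p j) \<notin> R" if ij: "Suc i < j" "j \<le> k" for i j
  proof
    assume "(p i, p j) \<in> R"
    then have "(x, y) \<in> R ^^ (i + 1 + (k - j))" using ends[of i j] ij relpow_add by fastforce
    then show False using kmin ij by fastforce
  qed
  ultimately show ?thesis using that p(1,2) w by blast
qed

lemma minor_step_has_K_minor:
  assumes "minor_step\<^sup>*\<^sup>* (V, E) (V', E')" "has_K_minor n V' E'"
  shows "has_K_minor n V E"
proof -
  obtain V'' E'' where m: "minor_step\<^sup>*\<^sup>* (V', E') (V'', E'')" and K: "finite V''" "card V'' = n"
    "complete_graph V'' E''"
    using assms(2) unfolding has_K_minor_def is_minor_def by auto
  have "minor_step\<^sup>*\<^sup>* (V, E) (V'', E'')" by (rule rtranclp_trans[OF assms(1) m])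
  then show ?thesis using K unfolding has_K_minor_def is_minor_def by blast
qed

lemma minor_delete_vertices:
  assumes "finite D" "D \<subseteq> V"
  shows "minor_step\<^sup>*\<^sup>* (V, E) (V - D, {e \<in> E. e \<inter> D = {}})"
  using assms
proof (induction D rule: finite_induct)
  case (insert d D)
  then have "minor_step (V - D, {e \<in> E. e \<inter> D = {}}) (V - D - {d}, {e \<in> {e \<in> E. e \<inter> D = {}}. d \<notin> e})"
    by (intro minor_step.del_vertex) blast
  moreover have "V - D - {d} = V - insert d D" "{e \<in> {e \<in> E. e \<inter> D = {}}. d \<notin> e} = {e \<in> E. e \<inter> insert d D = {}}"
    by blast+
  ultimately show ?case using insert by (metis (no_types, lifting) insert_subset rtranclp.rtrancl_into_rtrancl)
qed simp

lemma induced_subgraph_minor: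
  assumes "simple_graph V E" "W \<subseteq> V"
  shows "minor_step\<^sup>*\<^sup>* (V, E) (W, {e \<in> E. e \<subseteq> W})"
proof -
  have "V - (V - W) = W" using assms(2) by blast
  moreover have "{e \<in> E. e \<inter> (V - W) = {}} = {e \<in> E. e \<subseteq> W}"
    using assms(1) by (auto elim: simple_graph_edgeE)
  ultimately show ?thesis
    using minor_delete_vertices[of "V - W" V E] simple_graph_finite[OF assms(1)] by simp
qed

lemma clique_has_K_minor:
  assumes "simple_graph V E" "is_clique V E W" "card W = n"
  shows "has_K_minor n V E"
proof -
  have W: "W \<subseteq> V" "finite W"
    using assms(1,2) simple_graph_finite finite_subset unfolding is_clique_def by blast+
  have "complete_graph W {e \<in> E. e \<subseteq> W}"
    unfolding complete_graph_def
  proof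
    show "{e \<in> E. e \<subseteq> W} \<subseteq> {{u, v} |u v. u \<in> W \<and> v \<in> W \<and> u \<noteq> v}"
    proof
      fix e assume e: "e \<in> {e \<in> E. e \<subseteq> W}"
      then obtain u v where "u \<noteq> v" "e = {u, v}" using simple_graph_edgeE[OF assms(1)] by blast
      then show "e \<in> {{u, v} |u v. u \<in> W \<and> v \<in> W \<and> u \<noteq> v}" using e by blast
    qed
    show "{{u, v} |u v. u \<in> W \<and> v \<in> W \<and> u \<noteq> v} \<subseteq> {e \<in> E. e \<subseteq> W}"
      using assms(2) unfolding is_clique_def by blast
  qed
  then show ?thesis
    using induced_subgraph_minor[OF assms(1) W(1)] W(2) assms(3)
    unfolding has_K_minor_def is_minor_def by blast
qed

lemma connected_on_contract:
  assumes E: "edges_within V E" and C: "connected_on E C"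
    and uw: "u \<in> C" "w \<in> C" "{u, w} \<in> E"
  shows "connected_on (contract_edges E u w) (C - {w})"
proof -
  let ?E' = "contract_edges E u w" and ?C' = "C - {w}"
  have "u \<noteq> w" using edges_withinD[OF E uw(3)] by blast
  define f where "f z = (if z = w then u else z)" for z
  have f_step: "(f z, f z') \<in> (adj_on ?E' ?C')\<^sup>*" if "(z, z') \<in> adj_on E C" for z z'
  proof -
    have zz: "{z, z'} \<in> E" "z \<in> C" "z' \<in> C" using that unfolding adj_on_def by auto
    then have "z \<noteq> z'" using edges_withinD[OF E] by blast
    consider "z \<noteq> w" "z' \<noteq> w" | "z' = w" | "z = w" by blast
    then show ?thesis
    proof cases
      case 1
      then have "(f z, f z') \<in> adj_on ?E' ?C'"
        using zz unfolding adj_on_def f_def contract_edges_def by auto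
      then show ?thesis by blast
    next
      case 2
      then have "f z = z" "f z' = u" "z \<noteq> w" using \<open>z \<noteq> z'\<close> unfolding f_def by auto
      moreover have "z = u \<or> {z, u} \<in> ?E'"
        using zz(1) 2 unfolding contract_edges_def by (auto simp: insert_commute)
      ultimately show ?thesis using zz uw \<open>u \<noteq> w\<close> unfolding adj_on_def by auto
    next
      case 3
      then have "f z = u" "f z' = z'" "z' \<noteq> w" using \<open>z \<noteq> z'\<close> unfolding f_def by auto
      moreover have "z' = u \<or> {u, z'} \<in> ?E'"
        using zz(1) 3 unfolding contract_edges_def by auto
      ultimately show ?thesis using zz uw \<open>u \<noteq> w\<close> unfolding adj_on_def by auto
    qed
  qed
  have f_path: "(f x, f y) \<in> (adj_on ?E' ?C')\<^sup>*" if "(x, y) \<in> (adj_on E C)\<^sup>*" for x y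
    using that
  proof (induction rule: rtrancl_induct)
    case (step y z)
    then show ?case using f_step by (meson rtrancl_trans)
  qed simp
  show ?thesis
    unfolding connected_on_def
  proof (intro ballI)
    fix x y assume xy: "x \<in> ?C'" "y \<in> ?C'"
    then have "(f x, f y) \<in> (adj_on ?E' ?C')\<^sup>*" using f_path connected_onD[OF C] by blast
    moreover have "f x = x" "f y = y" using xy unfolding f_def by auto
    ultimately show "(x, y) \<in> (adj_on ?E' ?C')\<^sup>*" by simp
  qed
qed

lemma connected_attachment_has_K_minor:
  assumes "simple_graph V E" "is_clique V E W" "card W = n" "C \<subseteq> V" "C \<noteq> {}" "C \<inter> W = {}"
    "connected_on E C" "\<forall>s\<in>W. \<exists>z\<in>C. {s, z} \<in> E"
  shows "has_K_minor (Suc n) V E"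
  using assms
proof (induction "card C" arbitrary: V E C rule: less_induct)
  case less
  have fC: "finite C" using less.prems(1,4) simple_graph_finite finite_subset by blast
  have E: "edges_within V E" using less.prems(1) by (rule simple_graph_edges_within)
  show ?case
  proof (cases "\<exists>v. C = {v}")
    case True
    then obtain v where v: "C = {v}" by blast
    have W: "W \<subseteq> V" "finite W"
      using less.prems(1,2) simple_graph_finite finite_subset unfolding is_clique_def by blast+
    have "is_clique V E (insert v W)"
      using less.prems(2,4,8) v unfolding is_clique_def by (auto simp: insert_commute)
    moreover have "card (insert v W) = Suc n" using v W(2) less.prems(3,6) by simp
    ultimately show ?thesis by (rule clique_has_K_minor[OF less.prems(1)])
  next
    case False
    then obtain u w0 where "u \<in> C" "w0 \<in> C" "u \<noteq> w0" using less.prems(5) by blast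
    then obtain w where "(u, w) \<in> adj_on E C"
      using connected_onD[OF less.prems(7)] by (metis converse_rtranclE)
    then have uw: "u \<in> C" "w \<in> C" "{u, w} \<in> E" unfolding adj_on_def by auto
    then have "u \<noteq> w" "w \<notin> W" using edges_withinD[OF E] less.prems(6) by blast+
    let ?E' = "contract_edges E u w" and ?C' = "C - {w}"
    have step: "minor_step (V, E) (V - {w}, ?E')" by (rule minor_step_contract[OF uw(3) \<open>u \<noteq> w\<close>])
    have "simple_graph (V - {w}) ?E'"
      using minor_step_edges_within[OF step] E less.prems(1)
      unfolding simple_graph_iff_edges_within by simp
    moreover have "is_clique (V - {w}) ?E' W"
      using less.prems(2) \<open>w \<notin> W\<close> unfolding is_clique_def contract_edges_def by blast
    moreover have "\<forall>s\<in>W. \<exists>z\<in>?C'. {s, z} \<in> ?E'"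
    proof
      fix s assume s: "s \<in> W"
      obtain z where z: "z \<in> C" "{s, z} \<in> E" using less.prems(8) s by blast
      have "s \<noteq> w" "s \<noteq> u" using s \<open>w \<notin> W\<close> uw(1) less.prems(6) by blast+
      then show "\<exists>z\<in>?C'. {s, z} \<in> ?E'"
        using z uw(1) \<open>u \<noteq> w\<close> unfolding contract_edges_def by (cases "z = w") (auto simp: insert_commute)
    qed
    moreover have "card ?C' < card C" using card_Diff1_less[OF fC uw(2)] .
    moreover have "?C' \<subseteq> V - {w}" "?C' \<noteq> {}" "?C' \<inter> W = {}"
      using less.prems(4,6) uw(1) \<open>u \<noteq> w\<close> by blast+
    ultimately have "has_K_minor (Suc n) (V - {w}) ?E'"
      using less.hyps connected_on_contract[OF E less.prems(7) uw] less.prems(3) by blast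
    then show ?thesis using minor_step_has_K_minor step by blast
  qed
qed

lemma cycle_of_fun:
  assumes "3 \<le> n" and "\<And>i j. i < j \<Longrightarrow> j < n \<Longrightarrow> c i \<noteq> c j"
    and "\<And>i. i < n \<Longrightarrow> c i \<in> V" and "\<And>i. i < n \<Longrightarrow> {c i, c (Suc i mod n)} \<in> E"
  shows "is_cycle V E (map c [0..<n])"
proof -
  have "distinct (map c [0..<n])"
    unfolding distinct_conv_nth using assms(2) by (auto simp: nat_neq_iff) (metis assms(2))
  moreover have "Suc i mod n < n" for i using assms(1) by simp
  ultimately show ?thesis unfolding is_cycle_def using assms by auto
qed

lemma cycle_of_fun_edge:
  assumes "i < n" shows "{c i, c (Suc i mod n)} \<in> cycle_edges (map c [0..<n])"
proof -
  have "Suc i mod n < n" using assms by simp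
  then have "{map c [0..<n] ! i, map c [0..<n] ! ((i + 1) mod n)} = {c i, c (Suc i mod n)}"
    using assms by simp
  then show ?thesis unfolding cycle_edges_def using assms by (metis (mono_tags, lifting) length_map
      length_upt mem_Collect_eq minus_nat.diff_0)
qed

lemma chordless_cycle_of_fun:
  assumes "edges_within V E" "0 < n"
    and "\<And>i j. i < j \<Longrightarrow> j < n \<Longrightarrow> {c i, c j} \<in> E \<Longrightarrow> j = Suc i \<or> (i = 0 \<and> Suc j = n)"
  shows "chordless E (map c [0..<n])"
  unfolding chordless_def
proof (intro ballI impI)
  fix x y assume "x \<in> set (map c [0..<n])" "y \<in> set (map c [0..<n])" and xy: "{x, y} \<in> E"
  then obtain i j where ij: "i < n" "j < n" "x = c i" "y = c j" by auto
  have chord: "{c i, c j} \<in> cycle_edges (map c [0..<n])"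
    if "i < j" "j < n" "{c i, c j} \<in> E" for i j
    using assms(3)[OF that] cycle_of_fun_edge[of i n c] cycle_of_fun_edge[of j n c] that
    by (auto simp: insert_commute)
  have "i \<noteq> j" using xy ij edges_withinD[OF assms(1)] by fastforce
  then show "{x, y} \<in> cycle_edges (map c [0..<n])"
    using chord[of i j] chord[of j i] xy ij by (cases "i < j") (auto simp: insert_commute)
qed

definition induced_path :: "'a set set \<Rightarrow> (nat \<Rightarrow> 'a) \<Rightarrow> nat \<Rightarrow> bool" where
  "induced_path E p m \<longleftrightarrow> (\<forall>i<m. {p i, p (Suc i)} \<in> E) \<and> (\<forall>i j. i < j \<longrightarrow> j \<le> m \<longrightarrow> p i \<noteq> p j) \<and>
     (\<forall>i j. i < j \<longrightarrow> j \<le> m \<longrightarrow> {p i, p j} \<in> E \<longrightarrow> j = Suc i)"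

lemma induced_path_edge: "induced_path E p m \<Longrightarrow> i < m \<Longrightarrow> {p i, p (Suc i)} \<in> E"
  unfolding induced_path_def by blast

lemma induced_path_inj: "induced_path E p m \<Longrightarrow> i < j \<Longrightarrow> j \<le> m \<Longrightarrow> p i \<noteq> p j"
  unfolding induced_path_def by blast

lemma induced_path_chord: "induced_path E p m \<Longrightarrow> i < j \<Longrightarrow> j \<le> m \<Longrightarrow> {p i, p j} \<in> E \<Longrightarrow> j = Suc i"
  unfolding induced_path_def by blast

lemma induced_path_vertices:
  assumes "\<Union>E \<subseteq> V" "induced_path E p m" "0 < m" "t \<le> m"
  shows "p t \<in> V"
proof (cases "t < m")
  case True
  then show ?thesis using induced_path_edge[OF assms(2) True] assms(1) by blast
next
  case False
  then have "Suc (m - 1) = t" "m - 1 < m" using assms(3,4) by auto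
  then have "{p (m - 1), p t} \<in> E" using induced_path_edge[OF assms(2), of "m - 1"] by simp
  then show ?thesis using assms(1) by blast
qed

lemma edges_within_Union:
  assumes "edges_within V E" shows "\<Union>E \<subseteq> V"
proof
  fix x assume "x \<in> \<Union>E"
  then obtain e where e: "e \<in> E" "x \<in> e" by blast
  then obtain u v where "u \<in> V" "v \<in> V" "e = {u, v}" using assms unfolding edges_within_def by blast
  then show "x \<in> V" using e(2) by blast
qed

text \<open>A shortest connecting walk is an induced path.\<close>

lemma rtrancl_adj_induced_path:
  assumes path: "(x, y) \<in> {(a, b). {a, b} \<in> F}\<^sup>*" and xy: "x \<noteq> y" "{x, y} \<notin> F"
  obtains p m where "induced_path F p m" "p 0 = x" "p m = y" "2 \<le> m"
proof -
  let ?R = "{(a, b). {a, b} \<in> F}"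
  obtain p m where p0: "p 0 = x" and pm: "p m = y" and w: "walk ?R p m"
    and dist: "\<And>i j. i < j \<Longrightarrow> j \<le> m \<Longrightarrow> p i \<noteq> p j"
    and short: "\<And>i j. Suc i < j \<Longrightarrow> j \<le> m \<Longrightarrow> (p i, p j) \<notin> ?R"
    using rtrancl_shortest_walk[OF path] by blast
  have "m \<noteq> 0" using p0 pm xy(1) by (metis le0 le_zero_eq)
  moreover have "m \<noteq> 1" using walkD[OF w, of 0] p0 pm xy(2) by auto
  ultimately have "2 \<le> m" by linarith
  have "induced_path F p m"
    unfolding induced_path_def
  proof (intro conjI allI impI)
    fix i assume "i < m"
    then show "{p i, p (Suc i)} \<in> F" using walkD[OF w] by simp
  next
    fix i j assume ij: "i < j" "j \<le> m"
    then show "p i \<noteq> p j" by (rule dist)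
    assume "{p i, p j} \<in> F"
    then have "\<not> Suc i < j" using short[of i j] ij(2) by auto
    then show "j = Suc i" using ij(1) by linarith
  qed
  then show ?thesis using that p0 pm \<open>2 \<le> m\<close> by blast
qed

lemma induced_path_closed_chordless_cycle:
  assumes E: "edges_within V E" and e: "{x, y} \<in> E"
    and p: "induced_path (E - {{x, y}}) p k" "p 0 = x" "p k = y" "2 \<le> k"
  shows "is_cycle V E (map p [0..<Suc k])" "chordless E (map p [0..<Suc k])"
    "{x, y} \<in> cycle_edges (map p [0..<Suc k])"
proof -
  define n where "n = Suc k"
  have inj: "p i \<noteq> p j" if "i < j" "j < n" for i j
    using induced_path_inj[OF p(1)] that unfolding n_def by simp
  have "\<Union>(E - {{x, y}}) \<subseteq> V" using edges_within_Union[OF E] by blast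
  then have pV: "p i \<in> V" if "i < n" for i
    using induced_path_vertices[OF _ p(1), of V i] p(4) that unfolding n_def by simp
  have pE: "{p i, p (Suc i mod n)} \<in> E" if "i < n" for i
  proof (cases "i < k")
    case True
    then show ?thesis using induced_path_edge[OF p(1) True] unfolding n_def by simp
  next
    case False
    then have "i = k" using that unfolding n_def by simp
    then show ?thesis using p(2,3) e unfolding n_def by (simp add: insert_commute)
  qed
  have chords: "j = Suc i \<or> (i = 0 \<and> Suc j = n)" if ij: "i < j" "j < n" "{p i, p j} \<in> E" for i j
  proof (cases "{p i, p j} = {x, y}")
    case True
    have "i < k" "j \<le> k" using ij unfolding n_def by simp_all
    then have "p i \<noteq> y" "p j \<noteq> x"
      using induced_path_inj[OF p(1), of i k] induced_path_inj[OF p(1), of 0 j] ij(1) p(2,3) by auto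
    then have "p i = p 0" "p j = p k" using True p(2,3) by (metis doubleton_eq_iff)+
    have "i = 0"
    proof (rule ccontr)
      assume "i \<noteq> 0"
      then show False using induced_path_inj[OF p(1), of 0 i] \<open>p i = p 0\<close> \<open>i < k\<close> by simp
    qed
    moreover have "j = k"
    proof (rule ccontr)
      assume "j \<noteq> k"
      then show False using induced_path_inj[OF p(1), of j k] \<open>p j = p k\<close> \<open>j \<le> k\<close> by simp
    qed
    ultimately show ?thesis unfolding n_def by simp
  next
    case False
    then show ?thesis using induced_path_chord[OF p(1)] ij unfolding n_def by simp
  qed
  have "3 \<le> n" using p(4) unfolding n_def by simp
  show "is_cycle V E (map p [0..<Suc k])"
    using cycle_of_fun[of n p V E, OF \<open>3 \<le> n\<close> inj pV pE] unfolding n_def .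
  show "chordless E (map p [0..<Suc k])"
    using chordless_cycle_of_fun[OF E _ chords] unfolding n_def by simp
  have "{p k, p (Suc k mod n)} \<in> cycle_edges (map p [0..<n])"
    by (rule cycle_of_fun_edge) (simp add: n_def)
  then show "{x, y} \<in> cycle_edges (map p [0..<Suc k])"
    using p(2,3) unfolding n_def by (simp add: insert_commute)
qed

lemma alt_path_chordless_cycle:
  assumes s: "simple_graph V E" and e: "{x, y} \<in> E"
    and path: "(x, y) \<in> {(a, b). {a, b} \<in> E - {{x, y}}}\<^sup>*"
  obtains cs where "is_cycle V E cs" "chordless E cs" "{x, y} \<in> cycle_edges cs"
proof -
  have E: "edges_within V E" using s by (rule simple_graph_edges_within)
  then have "x \<noteq> y" using edges_withinD[OF E e] by blast
  then obtain p k where "induced_path (E - {{x, y}}) p k" "p 0 = x" "p k = y" "2 \<le> k"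
    using rtrancl_adj_induced_path[OF path] by blast
  then show ?thesis using induced_path_closed_chordless_cycle[OF E e] that by blast
qed

lemma cycle_length_3_triangle:
  assumes c: "is_cycle V E cs" "length cs = 3" and e: "{x, y} \<in> cycle_edges cs"
  shows "\<exists>z. {x, z} \<in> E \<and> {y, z} \<in> E \<and> z \<noteq> x \<and> z \<noteq> y"
proof -
  obtain a b d where cs: "cs = [a, b, d]"
    using c(2) by (metis (no_types, lifting) length_0_conv length_Suc_conv numeral_3_eq_3)
  have all: "{cs ! i, cs ! ((i + 1) mod 3)} \<in> E" if "i < 3" for i
    using c that unfolding is_cycle_def by simp
  obtain i where i: "i < 3" "{x, y} = {cs ! i, cs ! ((i + 1) mod 3)}"
    using e c(2) unfolding cycle_edges_def by auto
  then have "i = 0 \<or> i = 1 \<or> i = 2" by auto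
  then have xy: "{x, y} = {a, b} \<or> {x, y} = {b, d} \<or> {x, y} = {d, a}"
    using i(2) by (elim disjE) (simp_all add: cs)
  have "distinct cs" using c(1) by (simp add: is_cycle_def)
  then have "distinct [a, b, d]" by (simp add: cs)
  moreover have "{a, b} \<in> E" "{b, d} \<in> E" "{d, a} \<in> E"
    using all[of 0] all[of 1] all[of 2] by (simp_all add: cs)
  moreover have "{b, a} \<in> E" "{d, b} \<in> E" "{a, d} \<in> E"
    using calculation(2-4) by (simp_all add: insert_commute)
  ultimately show ?thesis using xy by (auto simp: doubleton_eq_iff)
qed

lemma cycle_edge_alt_path:
  assumes c: "is_cycle V E cs" and e: "{x, y} \<in> cycle_edges cs"
  shows "(x, y) \<in> {(a, b). {a, b} \<in> E - {{x, y}}}\<^sup>*"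
proof -
  let ?n = "length cs"
  have n: "3 \<le> ?n" using c by (rule is_cycle_length)
  obtain i where i: "i < ?n" "{x, y} = {cs ! i, cs ! ((i + 1) mod ?n)}"
    using e unfolding cycle_edges_def by blast
  define c where "c = cyc_at cs i"
  have xy: "{x, y} = {c 0, c 1}" using i unfolding c_def cyc_at_def by simp
  have "cs \<noteq> []" using n by auto
  let ?R = "{(a, b). {a, b} \<in> E - {{c 0, c 1}}}"
  have ne: "c a \<noteq> c b" if "a < ?n" "b < ?n" "a \<noteq> b" for a b
    using cyc_at_eq_iff[OF c that(1,2)] that(3) unfolding c_def by blast
  have around: "(c 1, c (Suc t)) \<in> ?R\<^sup>*" if "t < ?n" for t
    using that
  proof (induction t)
    case (Suc t)
    have "{c (Suc t), c (Suc (Suc t))} \<in> E" unfolding c_def by (rule cyc_at_edge[OF c])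
    moreover have "c (Suc t) \<notin> {c 0, c 1} \<or> c (Suc (Suc t)) \<notin> {c 0, c 1}"
    proof (cases t)
      case 0
      then show ?thesis using ne[of 2 0] ne[of 2 1] n \<open>cs \<noteq> []\<close> by (simp add: numeral_2_eq_2)
    next
      case (Suc m)
      then show ?thesis using ne[of "Suc t" 0] ne[of "Suc t" 1] Suc.prems \<open>cs \<noteq> []\<close> by simp
    qed
    then have "{c (Suc t), c (Suc (Suc t))} \<noteq> {c 0, c 1}" by blast
    ultimately have "(c (Suc t), c (Suc (Suc t))) \<in> ?R" by simp
    with Suc.IH Suc.prems show ?case by (simp add: rtrancl.rtrancl_into_rtrancl)
  qed simp
  have "Suc (?n - 1) = ?n" "?n - 1 < ?n" using n by simp_all
  then have back_path: "(c 1, c 0) \<in> ?R\<^sup>*"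
    using around[of "?n - 1"] cyc_at_length[of cs i] unfolding c_def by simp
  have "sym ?R" unfolding sym_def by (auto simp: insert_commute)
  then have forth: "(c 0, c 1) \<in> ?R\<^sup>*" by (rule symD[OF sym_rtrancl back_path])
  have R: "{(a, b). {a, b} \<in> E - {{x, y}}} = ?R" using xy by simp
  consider "x = c 0" "y = c 1" | "x = c 1" "y = c 0" using xy by (metis doubleton_eq_iff)
  then show ?thesis unfolding R using forth back_path by cases simp_all
qed

lemma bridgeless_chordal_edge_in_triangle:
  assumes "simple_graph V E" "chordal V E" "bridgeless V E" "{x, y} \<in> E"
  shows "\<exists>z. {x, z} \<in> E \<and> {y, z} \<in> E \<and> z \<noteq> x \<and> z \<noteq> y"
proof -
  obtain cs0 where "is_cycle V E cs0" "{x, y} \<in> cycle_edges cs0"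
    using assms(3,4) unfolding bridgeless_def is_bridge_def by blast
  then have "(x, y) \<in> {(a, b). {a, b} \<in> E - {{x, y}}}\<^sup>*" by (rule cycle_edge_alt_path)
  then obtain cs where cs: "is_cycle V E cs" "chordless E cs" "{x, y} \<in> cycle_edges cs"
    by (rule alt_path_chordless_cycle[OF assms(1,4)])
  have "length cs \<le> 3" by (rule chordalD[OF assms(2) cs(1,2)])
  moreover have "3 \<le> length cs" by (rule is_cycle_length[OF cs(1)])
  ultimately have "length cs = 3" by simp
  then show ?thesis by (rule cycle_length_3_triangle[OF cs(1) _ cs(3)])
qed

section \<open>Dirac's lemma\<close>

lemma rtrancl_adj_on_induced_path:
  assumes xy: "{x, y} \<notin> E" "x \<noteq> y" and path: "(x, y) \<in> (adj_on E B)\<^sup>*"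
  obtains p m where "induced_path E p m" "p 0 = x" "p m = y" "2 \<le> m" "\<And>t. t \<le> m \<Longrightarrow> p t \<in> B"
proof -
  let ?F = "{e \<in> E. e \<subseteq> B}"
  have "adj_on E B = {(a, b). {a, b} \<in> ?F}" unfolding adj_on_def by auto
  then obtain p m where p: "induced_path ?F p m" "p 0 = x" "p m = y" "2 \<le> m"
    using rtrancl_adj_induced_path[of x y ?F] path xy by auto
  have "\<Union>?F \<subseteq> B" by blast
  then have inB: "p t \<in> B" if "t \<le> m" for t
    using induced_path_vertices[OF _ p(1), of B t] p(4) that by simp
  have "induced_path E p m"
    using p(1) inB unfolding induced_path_def by auto
  then show ?thesis using that p(2-4) inB by blast
qed

locale induced_path_pair =
  fixes E :: "'a set set" and p q :: "nat \<Rightarrow> 'a" and m l :: nat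
  assumes p: "induced_path E p m" and q: "induced_path E q l"
    and same_ends: "p 0 = q 0" "p m = q l" and long: "2 \<le> m" "2 \<le> l"
    and apart: "\<And>i j. 0 < i \<Longrightarrow> i < m \<Longrightarrow> 0 < j \<Longrightarrow> j < l \<Longrightarrow> p i \<noteq> q j \<and> {p i, q j} \<notin> E"
begin

definition cyc :: "nat \<Rightarrow> 'a" where
  "cyc t = (if t \<le> m then p t else q (m + l - t))"

lemma cyc_p: "t \<le> m \<Longrightarrow> cyc t = p t"
  unfolding cyc_def by simp

lemma cyc_q: "m \<le> t \<Longrightarrow> cyc t = q (m + l - t)"
  using same_ends(2) unfolding cyc_def by (cases "t = m") auto

lemma cyc_0: "cyc 0 = q 0"
  using same_ends(1) cyc_p by simp

lemma cyc_inj: "i < j \<Longrightarrow> j < m + l \<Longrightarrow> cyc i \<noteq> cyc j"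
proof -
  assume ij: "i < j" "j < m + l"
  consider "j \<le> m" | "m \<le> i" | "i < m" "m < j" by linarith
  then show ?thesis
  proof cases
    case 1
    then show ?thesis using induced_path_inj[OF p] ij cyc_p by simp
  next
    case 2
    moreover have "m + l - j < m + l - i" "m + l - i \<le> l" using ij 2 by linarith+
    ultimately show ?thesis using induced_path_inj[OF q, of "m + l - j" "m + l - i"] ij cyc_q by auto
  next
    case 3
    then have "0 < m + l - j" "m + l - j < l" using ij by linarith+
    then show ?thesis
      using apart[of i "m + l - j"] induced_path_inj[OF q, of 0 "m + l - j"] 3 cyc_p cyc_q cyc_0
      by (cases "i = 0") auto
  qed
qed

lemma cyc_edge:
  assumes i: "i < m + l" shows "{cyc i, cyc (Suc i mod (m + l))} \<in> E"
proof (cases "i < m")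
  case True
  then show ?thesis using induced_path_edge[OF p True] cyc_p long(2) by simp
next
  case False
  have "cyc (Suc i mod (m + l)) = q (m + l - Suc i)"
    using cyc_q[of "Suc i"] cyc_0 False i by (cases "Suc i = m + l") auto
  moreover have "{q (m + l - Suc i), q (Suc (m + l - Suc i))} \<in> E"
    using induced_path_edge[OF q, of "m + l - Suc i"] i False by simp
  moreover have "Suc (m + l - Suc i) = m + l - i" using i by simp
  ultimately show ?thesis using cyc_q[of i] False by (simp add: insert_commute)
qed

lemma cyc_chord:
  assumes ij: "i < j" "j < m + l" "{cyc i, cyc j} \<in> E"
  shows "j = Suc i \<or> (i = 0 \<and> Suc j = m + l)"
proof -
  consider "j \<le> m" | "m \<le> i" | "i < m" "m < j" by linarith
  then show ?thesis
  proof cases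
    case 1
    then show ?thesis using induced_path_chord[OF p] ij cyc_p by simp
  next
    case 2
    then have "{q (m + l - j), q (m + l - i)} \<in> E" using ij cyc_q[of i] cyc_q[of j] by (simp add: insert_commute)
    moreover have "m + l - j < m + l - i" "m + l - i \<le> l" using ij 2 by linarith+
    ultimately have "m + l - i = Suc (m + l - j)" using induced_path_chord[OF q] by blast
    then show ?thesis using ij by linarith
  next
    case 3
    then have j: "0 < m + l - j" "m + l - j < l" using ij by linarith+
    show ?thesis
    proof (cases "i = 0")
      case True
      then have "{q 0, q (m + l - j)} \<in> E" using ij(3) cyc_0 cyc_q 3 by simp
      then have "m + l - j = 1" using induced_path_chord[OF q, of 0 "m + l - j"] j by simp
      then show ?thesis using True ij(2) by linarith
    next
      case False
      then show ?thesis using apart[of i "m + l - j"] ij(3) j 3 cyc_p cyc_q by simp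
    qed
  qed
qed

lemma chordless_cycle:
  assumes E: "edges_within V E"
  shows "is_cycle V E (map cyc [0..<m + l])" "chordless E (map cyc [0..<m + l])"
proof -
  have "cyc i \<in> V" if "i < m + l" for i
    using induced_path_vertices[OF edges_within_Union[OF E] p] induced_path_vertices[OF edges_within_Union[OF E] q]
      long that cyc_p cyc_q by (cases "i \<le> m") auto
  moreover have "3 \<le> m + l" using long by linarith
  ultimately show "is_cycle V E (map cyc [0..<m + l])"
    using cycle_of_fun[of "m + l" cyc V E] cyc_inj cyc_edge by blast
  show "chordless E (map cyc [0..<m + l])"
    using chordless_cycle_of_fun[OF E _ cyc_chord] long by simp
qed

end

lemma chordal_separated_paths_adjacent:
  assumes s: "simple_graph V E" and ch: "chordal V E" and "x \<noteq> y"
    and AB: "A \<inter> B = {}" "x \<notin> A \<union> B" "y \<notin> A \<union> B"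
    and no_edge: "\<And>u v. u \<in> A \<Longrightarrow> v \<in> B \<Longrightarrow> {u, v} \<notin> E"
    and pA: "(x, y) \<in> (adj_on E (A \<union> {x, y}))\<^sup>*" and pB: "(x, y) \<in> (adj_on E (B \<union> {x, y}))\<^sup>*"
  shows "{x, y} \<in> E"
proof (rule ccontr)
  assume xy: "{x, y} \<notin> E"
  obtain p m where p: "induced_path E p m" "p 0 = x" "p m = y" "2 \<le> m"
    and p_in: "\<And>t. t \<le> m \<Longrightarrow> p t \<in> A \<union> {x, y}"
    using rtrancl_adj_on_induced_path[OF xy \<open>x \<noteq> y\<close> pA] by blast
  obtain q l where q: "induced_path E q l" "q 0 = x" "q l = y" "2 \<le> l"
    and q_in: "\<And>t. t \<le> l \<Longrightarrow> q t \<in> B \<union> {x, y}"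
    using rtrancl_adj_on_induced_path[OF xy \<open>x \<noteq> y\<close> pB] by blast
  have interior: "f t \<in> C" if "induced_path E f k" "f 0 = x" "f k = y"
    "\<And>t. t \<le> k \<Longrightarrow> f t \<in> C \<union> {x, y}" "0 < t" "t < k" for f k t C
    using that unfolding induced_path_def by (metis le_refl less_imp_le_nat UnE insertE singletonD)
  have "p i \<noteq> q j \<and> {p i, q j} \<notin> E" if "0 < i" "i < m" "0 < j" "j < l" for i j
  proof -
    have "p i \<in> A" "q j \<in> B"
      using interior[of p m A, OF p(1-3) p_in that(1,2)] interior[of q l B, OF q(1-3) q_in that(3,4)]
      by simp_all
    moreover have "{p i, q j} \<notin> E" using no_edge calculation by simp
    ultimately show ?thesis using AB(1) by auto
  qed
  then interpret induced_path_pair E p q m l using p q by unfold_locales simp_all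
  have "length (map cyc [0..<m + l]) \<le> 3"
    using chordalD[OF ch chordless_cycle[OF simple_graph_edges_within[OF s]]] .
  then show False using long by simp
qed

section \<open>Separators and the two pieces\<close>

definition comp_avoiding :: "'a set set \<Rightarrow> 'a set \<Rightarrow> 'a \<Rightarrow> 'a set" where
  "comp_avoiding E S a = {z. (a, z) \<in> (adj_on E (- S))\<^sup>*}"

lemma comp_avoiding_self: "a \<in> comp_avoiding E S a"
  unfolding comp_avoiding_def by simp

lemma comp_avoiding_disjoint_separator:
  assumes "a \<notin> S" "z \<in> comp_avoiding E S a" shows "z \<notin> S"
proof -
  have "(a, z) \<in> (adj_on E (- S))\<^sup>*" using assms(2) unfolding comp_avoiding_def by blast
  then show ?thesis using assms(1) by (cases rule: rtranclE) (auto simp: adj_on_def)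
qed

lemma comp_avoiding_closed:
  assumes "a \<notin> S" "w \<in> comp_avoiding E S a" "{w, z} \<in> E" "z \<notin> S"
  shows "z \<in> comp_avoiding E S a"
proof -
  have "(w, z) \<in> adj_on E (- S)"
    using comp_avoiding_disjoint_separator[OF assms(1,2)] assms(3,4) unfolding adj_on_def by blast
  then show ?thesis using assms(2) unfolding comp_avoiding_def by (simp add: rtrancl.rtrancl_into_rtrancl)
qed

lemma comp_avoiding_subset:
  assumes "edges_within V E" "a \<in> V" shows "comp_avoiding E S a \<subseteq> V"
proof
  fix z assume "z \<in> comp_avoiding E S a"
  then have "(a, z) \<in> (adj_on E (- S))\<^sup>*" unfolding comp_avoiding_def by blast
  then show "z \<in> V"
    using assms edges_withinD[OF assms(1)] by (cases rule: rtranclE) (auto simp: adj_on_def)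
qed

lemma connected_on_comp_avoiding:
  assumes "a \<notin> S" shows "connected_on E (comp_avoiding E S a)"
proof -
  let ?C = "comp_avoiding E S a"
  have from_a: "(a, z) \<in> (adj_on E ?C)\<^sup>*" if "(a, z) \<in> (adj_on E (- S))\<^sup>*" for z
    using that
  proof (induction rule: rtrancl_induct)
    case (step y z)
    then have "y \<in> ?C" "z \<in> ?C" unfolding comp_avoiding_def by (auto intro: rtrancl.rtrancl_into_rtrancl)
    then have "(y, z) \<in> adj_on E ?C" using step(2) unfolding adj_on_def by blast
    then show ?case using step(3) by (simp add: rtrancl.rtrancl_into_rtrancl)
  qed simp
  show ?thesis
    unfolding connected_on_def
  proof (intro ballI)
    fix u v assume "u \<in> ?C" "v \<in> ?C"
    then have "(a, u) \<in> (adj_on E ?C)\<^sup>*" "(a, v) \<in> (adj_on E ?C)\<^sup>*"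
      using from_a unfolding comp_avoiding_def by blast+
    then show "(u, v) \<in> (adj_on E ?C)\<^sup>*"
      using symD[OF sym_rtrancl[OF sym_adj_on]] rtrancl_trans by metis
  qed
qed

lemma comp_avoiding_disjoint:
  assumes "(a, b) \<notin> (adj_on E (- S))\<^sup>*"
  shows "comp_avoiding E S a \<inter> comp_avoiding E S b = {}"
proof (rule ccontr)
  assume "comp_avoiding E S a \<inter> comp_avoiding E S b \<noteq> {}"
  then obtain z where "(a, z) \<in> (adj_on E (- S))\<^sup>*" "(b, z) \<in> (adj_on E (- S))\<^sup>*"
    unfolding comp_avoiding_def by blast
  then show False
    using assms symD[OF sym_rtrancl[OF sym_adj_on]] rtrancl_trans by metis
qed

lemma comp_avoiding_neighbour:
  assumes sep: "(a, b) \<notin> (adj_on E (- S))\<^sup>*" and "(a, b) \<in> (adj_on E (- (S - {s})))\<^sup>*"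
    and "s \<in> S" "a \<notin> S"
  shows "\<exists>w\<in>comp_avoiding E S a. {w, s} \<in> E"
proof -
  have "z \<in> comp_avoiding E S a \<or> (\<exists>w\<in>comp_avoiding E S a. {w, s} \<in> E)"
    if "(a, z) \<in> (adj_on E (- (S - {s})))\<^sup>*" for z
    using that
  proof (induction rule: rtrancl_induct)
    case (step y z)
    have e: "{y, z} \<in> E" "z \<notin> S - {s}" using step(2) unfolding adj_on_def by auto
    from step(3) show ?case
    proof
      assume y: "y \<in> comp_avoiding E S a"
      show ?thesis
      proof (cases "z = s")
        case False
        then show ?thesis using comp_avoiding_closed[OF \<open>a \<notin> S\<close> y e(1)] e(2) by blast
      qed (use y e in blast)
    qed blast
  qed (simp add: comp_avoiding_self)
  from this[OF assms(2)] show ?thesis using sep unfolding comp_avoiding_def by blast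
qed

lemma minimal_separator_exists:
  assumes s: "simple_graph V E" and ab: "a \<in> V" "b \<in> V" "{a, b} \<notin> E" "a \<noteq> b"
  obtains S where "S \<subseteq> V - {a, b}" "(a, b) \<notin> (adj_on E (- S))\<^sup>*"
    "\<And>s. s \<in> S \<Longrightarrow> (a, b) \<in> (adj_on E (- (S - {s})))\<^sup>*"
proof -
  have E: "edges_within V E" using s by (rule simple_graph_edges_within)
  define P where "P k \<longleftrightarrow> (\<exists>S. S \<subseteq> V - {a, b} \<and> (a, b) \<notin> (adj_on E (- S))\<^sup>* \<and> card S = k)" for k
  have stuck: "z = a" if "(a, z) \<in> (adj_on E (- (V - {a, b})))\<^sup>*" for z
    using that
  proof (induction rule: rtrancl_induct)
    case (step y z)
    then have "{a, z} \<in> E" "z \<in> V - (V - {a, b})"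
      using edges_withinD[OF E] unfolding adj_on_def by auto
    then show ?case using ab(3) by auto
  qed simp
  have "P (card (V - {a, b}))" unfolding P_def using stuck ab(4) by blast
  then obtain k where k: "P k" "\<And>m. m < k \<Longrightarrow> \<not> P m" using exists_least_iff[of P] by blast
  then obtain S where S: "S \<subseteq> V - {a, b}" "(a, b) \<notin> (adj_on E (- S))\<^sup>*" "card S = k"
    unfolding P_def by blast
  have "finite S" using S(1) simple_graph_finite[OF s] finite_subset by blast
  have "(a, b) \<in> (adj_on E (- (S - {s})))\<^sup>*" if "s \<in> S" for s
  proof (rule ccontr)
    assume "(a, b) \<notin> (adj_on E (- (S - {s})))\<^sup>*"
    moreover have "S - {s} \<subseteq> V - {a, b}" using S(1) by blast
    ultimately have "P (card (S - {s}))" unfolding P_def by blast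
    moreover have "card (S - {s}) < k" using card_Diff1_less[OF \<open>finite S\<close> that] S(3) by simp
    ultimately show False using k(2) by blast
  qed
  then show ?thesis using that S(1,2) by blast
qed

lemma simple_graph_induced:
  assumes "simple_graph V E" "W \<subseteq> V" shows "simple_graph W {e \<in> E. e \<subseteq> W}"
  unfolding simple_graph_def
proof (intro conjI ballI)
  show "finite W" using assms simple_graph_finite finite_subset by blast
  fix e assume e: "e \<in> {e \<in> E. e \<subseteq> W}"
  then have "e \<in> E" by simp
  then obtain u v where "u \<in> V" "v \<in> V" "u \<noteq> v" "e = {u, v}" by (rule simple_graph_edgeE[OF assms(1)])
  then show "\<exists>u v. u \<in> W \<and> v \<in> W \<and> u \<noteq> v \<and> e = {u, v}" using e by blast
qed

lemma chordal_induced: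
  assumes "chordal V E" "W \<subseteq> V" shows "chordal W {e \<in> E. e \<subseteq> W}"
  unfolding chordal_iff
proof (intro notI, elim exE conjE)
  fix cs assume c: "is_cycle W {e \<in> E. e \<subseteq> W} cs" "4 \<le> length cs" "chordless {e \<in> E. e \<subseteq> W} cs"
  have "set cs \<subseteq> W" using c(1) unfolding is_cycle_def by simp
  then have "is_cycle V E cs" "chordless E cs"
    using c(1,3) assms(2) unfolding is_cycle_def chordless_def by (simp_all add: subset_iff)
  then show False using chordalD[OF assms(1)] c(2) by fastforce
qed

lemma has_K_minor_induced:
  assumes "simple_graph V E" "W \<subseteq> V" "has_K_minor n W {e \<in> E. e \<subseteq> W}"
  shows "has_K_minor n V E"
  using minor_step_has_K_minor[OF induced_subgraph_minor[OF assms(1,2)] assms(3)] .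

lemma connected_on_extend_path:
  assumes "connected_on E C" "x' \<in> C" "y' \<in> C" "{x, x'} \<in> E" "{y', y} \<in> E"
  shows "(x, y) \<in> (adj_on E (C \<union> {x, y}))\<^sup>*"
proof -
  have "(x', y') \<in> (adj_on E C)\<^sup>*" by (rule connected_onD[OF assms(1-3)])
  moreover have "adj_on E C \<subseteq> adj_on E (C \<union> {x, y})" by (rule adj_on_mono) auto
  ultimately have "(x', y') \<in> (adj_on E (C \<union> {x, y}))\<^sup>*" using rtrancl_mono by blast
  moreover have "(x, x') \<in> adj_on E (C \<union> {x, y})" "(y', y) \<in> adj_on E (C \<union> {x, y})"
    using assms unfolding adj_on_def by auto
  ultimately show ?thesis by (meson converse_rtrancl_into_rtrancl rtrancl.rtrancl_into_rtrancl)
qed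

text \<open>Each edge lies in a triangle; if the triangle leaves \<open>W\<close>, the detour through \<open>C\<close>
  still puts the edge on a cycle of \<open>G[W]\<close>.\<close>

lemma bridgeless_induced_attached:
  assumes s: "simple_graph V E" and ch: "chordal V E" and br: "bridgeless V E"
    and W: "W \<subseteq> V" and C: "C \<subseteq> W" "connected_on E C"
    and attached: "\<And>x z. x \<in> W \<Longrightarrow> {x, z} \<in> E \<Longrightarrow> z \<notin> W \<Longrightarrow> x \<notin> C \<and> (\<exists>w\<in>C. {w, x} \<in> E)"
  shows "bridgeless W {e \<in> E. e \<subseteq> W}"
  unfolding bridgeless_def is_bridge_def
proof (intro ballI notI)
  let ?EW = "{e \<in> E. e \<subseteq> W}"
  have sW: "simple_graph W ?EW" using simple_graph_induced[OF s W] .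
  fix e assume e: "e \<in> ?EW" and nb: "e \<in> ?EW \<and> \<not> (\<exists>cs. is_cycle W ?EW cs \<and> e \<in> cycle_edges cs)"
  obtain x y where xy: "x \<in> W" "y \<in> W" "e = {x, y}" using simple_graph_edgeE[OF sW e] by blast
  have eE: "{x, y} \<in> E" using e xy by blast
  obtain z where z: "{x, z} \<in> E" "{y, z} \<in> E" "z \<noteq> x" "z \<noteq> y"
    using bridgeless_chordal_edge_in_triangle[OF s ch br eE] by blast
  show False
  proof (cases "z \<in> W")
    case True
    then have "{x, z} \<in> ?EW" "{y, z} \<in> ?EW" using z xy by auto
    then show False using triangle_edge_on_cycle[OF sW _ _ _ z(3,4)] e nb xy by blast
  next
    case False
    obtain x' where x': "x' \<in> C" "{x', x} \<in> E" "x \<notin> C" using attached[OF xy(1) z(1) False] by blast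
    obtain y' where y': "y' \<in> C" "{y', y} \<in> E" "y \<notin> C" using attached[OF xy(2) z(2) False] by blast
    let ?R = "{(a, b). {a, b} \<in> ?EW - {{x, y}}}"
    have "adj_on E C = adj_on ?EW C" using C(1) unfolding adj_on_def by blast
    then have "(x', y') \<in> (adj_on ?EW C)\<^sup>*" using connected_onD[OF C(2) x'(1) y'(1)] by simp
    moreover have "adj_on ?EW C \<subseteq> ?R" using x'(3) unfolding adj_on_def by (auto simp: doubleton_eq_iff)
    ultimately have "(x', y') \<in> ?R\<^sup>*" using rtrancl_mono by blast
    moreover have "(x, x') \<in> ?R" "(y', y) \<in> ?R"
      using x' y' C(1) xy by (auto simp: insert_commute doubleton_eq_iff)
    ultimately have path: "(x, y) \<in> ?R\<^sup>*"
      by (meson converse_rtrancl_into_rtrancl rtrancl.rtrancl_into_rtrancl)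
    have "{x, y} \<in> ?EW" using e xy by simp
    then obtain cs where "is_cycle W ?EW cs" "chordless ?EW cs" "{x, y} \<in> cycle_edges cs"
      by (rule alt_path_chordless_cycle[OF sW _ path])
    then show False using nb xy by blast
  qed
qed

lemma connected_graph_if_reach:
  assumes "h \<in> V" "\<And>z. z \<in> V \<Longrightarrow> (z, h) \<in> {(x, y). {x, y} \<in> E}\<^sup>*"
  shows "connected_graph V E"
  unfolding connected_graph_def
proof (intro conjI ballI)
  fix u v assume "u \<in> V" "v \<in> V"
  then have "(u, h) \<in> {(x, y). {x, y} \<in> E}\<^sup>*" "(h, v) \<in> {(x, y). {x, y} \<in> E}\<^sup>*"
    using assms(2) symD[OF sym_rtrancl[OF sym_adj], of v h] by simp_all
  then show "(u, v) \<in> {(x, y). {x, y} \<in> E}\<^sup>*" by (rule rtrancl_trans)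
qed (use assms(1) in blast)

lemma comp_avoiding_edge:
  assumes "a \<notin> S" "w \<in> comp_avoiding E S a" "{w, z} \<in> E"
  shows "z \<in> comp_avoiding E S a \<union> S"
  using comp_avoiding_closed[OF assms] by blast

lemma comp_avoiding_split_edges:
  assumes "edges_within V E" "a \<notin> S"
  shows "E = {e \<in> E. e \<subseteq> comp_avoiding E S a \<union> S} \<union> {e \<in> E. e \<subseteq> V - comp_avoiding E S a}"
    (is "E = ?E1 \<union> ?E2")
proof
  show "E \<subseteq> ?E1 \<union> ?E2"
  proof
    fix e assume e: "e \<in> E"
    then obtain u v where uv: "u \<in> V" "v \<in> V" "e = {u, v}"
      using assms(1) unfolding edges_within_def by blast
    then show "e \<in> ?E1 \<union> ?E2"
      using comp_avoiding_edge[OF assms(2), where w=u and z=v] comp_avoiding_edge[OF assms(2), where w=v and z=u] e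
      by (auto simp: insert_commute)
  qed
qed blast

lemma connected_graph_comp_side:
  assumes "a \<notin> S" and attach: "\<And>s. s \<in> S \<Longrightarrow> \<exists>w\<in>comp_avoiding E S a. {w, s} \<in> E"
  shows "connected_graph (comp_avoiding E S a \<union> S) {e \<in> E. e \<subseteq> comp_avoiding E S a \<union> S}"
proof -
  let ?C = "comp_avoiding E S a" and ?E1 = "{e \<in> E. e \<subseteq> comp_avoiding E S a \<union> S}"
  let ?R = "{(x, y). {x, y} \<in> ?E1}"
  have "adj_on E ?C \<subseteq> ?R" unfolding adj_on_def by auto
  then have from_a: "(a, w) \<in> ?R\<^sup>*" if "w \<in> ?C" for w
    using rtrancl_mono connected_onD[OF connected_on_comp_avoiding[OF assms(1)] comp_avoiding_self that]
    by blast
  have reach: "(a, z) \<in> ?R\<^sup>*" if z: "z \<in> ?C \<union> S" for z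
  proof (cases "z \<in> ?C")
    case False
    then have "z \<in> S" using z by blast
    then obtain w where w: "w \<in> ?C" "{w, z} \<in> E" using attach by blast
    then have "(w, z) \<in> ?R" using z by auto
    then show ?thesis by (rule rtrancl.rtrancl_into_rtrancl[OF from_a[OF w(1)]])
  qed (rule from_a)
  have "a \<in> ?C \<union> S" using comp_avoiding_self[of a E S] by blast
  then show ?thesis
    by (rule connected_graph_if_reach) (rule symD[OF sym_rtrancl[OF sym_adj] reach])
qed

lemma connected_graph_other_side:
  assumes E: "edges_within V E" and conn: "connected_graph V E" and a: "a \<in> V" "a \<notin> S"
    and S: "S \<noteq> {}" "is_clique V E S"
  shows "connected_graph (V - comp_avoiding E S a) {e \<in> E. e \<subseteq> V - comp_avoiding E S a}"
proof -
  let ?C = "comp_avoiding E S a" and ?V2 = "V - comp_avoiding E S a"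
  let ?R = "{(x, y). {x, y} \<in> {e \<in> E. e \<subseteq> ?V2}}"
  obtain s0 where s0: "s0 \<in> S" using S(1) by blast
  have SV2: "S \<subseteq> ?V2" using S(2) comp_avoiding_disjoint_separator[OF a(2)] unfolding is_clique_def by blast
  have to_S: "(t \<in> ?V2 \<and> (z, t) \<in> ?R\<^sup>*) \<or> (\<exists>s\<in>S. (z, s) \<in> ?R\<^sup>*)"
    if "z \<in> ?V2" "(z, t) \<in> {(x, y). {x, y} \<in> E}\<^sup>*" for z t
    using that(2)
  proof (induction rule: rtrancl_induct)
    case (step t t')
    have e: "{t, t'} \<in> E" using step(2) by simp
    from step(3) show ?case
    proof
      assume t: "t \<in> ?V2 \<and> (z, t) \<in> ?R\<^sup>*"
      show ?thesis
      proof (cases "t' \<in> ?V2")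
        case True
        then have "(t, t') \<in> ?R" using t e by auto
        then show ?thesis using t True by (meson rtrancl.rtrancl_into_rtrancl)
      next
        case False
        then have "t' \<in> ?C" using edges_withinD[OF E e] by blast
        then have "t \<in> S" using comp_avoiding_edge[OF a(2) _ e[unfolded insert_commute]] t by blast
        then show ?thesis using t by blast
      qed
    qed blast
  qed (use that in simp)
  have "(z, s0) \<in> ?R\<^sup>*" if z: "z \<in> ?V2" for z
  proof -
    have "(z, a) \<in> {(x, y). {x, y} \<in> E}\<^sup>*" using conn z a(1) unfolding connected_graph_def by blast
    moreover have "a \<notin> ?V2" using comp_avoiding_self[of a E S] by blast
    ultimately obtain s where s: "s \<in> S" "(z, s) \<in> ?R\<^sup>*" using to_S[OF z] by blast
    show ?thesis
    proof (cases "s = s0")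
      case False
      then have "(s, s0) \<in> ?R" using S(2) s s0 SV2 unfolding is_clique_def by blast
      then show ?thesis using s(2) by (rule rtrancl.rtrancl_into_rtrancl[rotated])
    qed (use s in simp)
  qed
  then show ?thesis using connected_graph_if_reach[of s0] s0 SV2 by blast
qed

lemma minimal_separator_clique:
  assumes s: "simple_graph V E" and ch: "chordal V E" and "S \<subseteq> V" "a \<notin> S" "b \<notin> S"
    and sep: "(a, b) \<notin> (adj_on E (- S))\<^sup>*"
    and attach: "\<And>s. s \<in> S \<Longrightarrow> (\<exists>w\<in>comp_avoiding E S a. {w, s} \<in> E) \<and> (\<exists>w\<in>comp_avoiding E S b. {w, s} \<in> E)"
  shows "is_clique V E S"
  unfolding is_clique_def
proof (intro conjI ballI impI)
  let ?A = "comp_avoiding E S a" and ?B = "comp_avoiding E S b"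
  fix x y assume xy: "x \<in> S" "y \<in> S" "x \<noteq> y"
  have AB: "?A \<inter> ?B = {}" by (rule comp_avoiding_disjoint[OF sep])
  have "z \<notin> S" if "z \<in> ?A \<union> ?B" for z
    using that comp_avoiding_disjoint_separator[OF assms(4), of z]
      comp_avoiding_disjoint_separator[OF assms(5), of z] by blast
  then have outside: "x \<notin> ?A \<union> ?B" "y \<notin> ?A \<union> ?B" using xy by blast+
  have no_edge: "{u, v} \<notin> E" if u: "u \<in> ?A" and v: "v \<in> ?B" for u v
  proof
    assume "{u, v} \<in> E"
    then have "v \<in> ?A \<union> S" by (rule comp_avoiding_edge[OF assms(4) u])
    then show False using comp_avoiding_disjoint_separator[OF assms(5) v] AB v by blast
  qed
  have path: "(x, y) \<in> (adj_on E (C \<union> {x, y}))\<^sup>*"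
    if C: "connected_on E C" "\<exists>w\<in>C. {w, x} \<in> E" "\<exists>w\<in>C. {w, y} \<in> E" for C
  proof -
    obtain x' y' where "x' \<in> C" "{x', x} \<in> E" "y' \<in> C" "{y', y} \<in> E" using C(2,3) by blast
    then show ?thesis using connected_on_extend_path[OF C(1), of x' y' x y] by (simp add: insert_commute)
  qed
  have "(x, y) \<in> (adj_on E (?A \<union> {x, y}))\<^sup>*"
    using path[OF connected_on_comp_avoiding[OF assms(4)]] attach xy(1,2) by blast
  moreover have "(x, y) \<in> (adj_on E (?B \<union> {x, y}))\<^sup>*"
    using path[OF connected_on_comp_avoiding[OF assms(5)]] attach xy(1,2) by blast
  ultimately show "{x, y} \<in> E"
    using chordal_separated_paths_adjacent[OF s ch xy(3) AB outside no_edge] by blast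
qed (rule assms(3))

lemma clique_attached_card_less:
  assumes s: "simple_graph V E" and no_minor: "\<not> has_K_minor (Suc n) V E" and S: "is_clique V E S"
    and C: "C \<subseteq> V" "C \<noteq> {}" "C \<inter> S = {}" "connected_on E C"
    and attach: "\<forall>s\<in>S. \<exists>z\<in>C. {s, z} \<in> E"
  shows "card S < n"
proof (rule ccontr)
  assume "\<not> card S < n"
  moreover have "finite S" using S s simple_graph_finite finite_subset unfolding is_clique_def by blast
  ultimately obtain W where W: "W \<subseteq> S" "card W = n" by (meson not_less obtain_subset_with_card_n)
  have "is_clique V E W" using S W(1) unfolding is_clique_def by blast
  then have "has_K_minor (Suc n) V E"
    using connected_attachment_has_K_minor[OF s _ W(2) C(1,2) _ C(4)] C(3) W(1) attach by blast
  then show False using no_minor by blast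
qed

lemma complete_bridgeless_k34_sum:
  assumes s: "simple_graph V E" and "2 \<le> card V" and br: "bridgeless V E"
    and no_minor: "\<not> has_K_minor 5 V E" and complete: "\<forall>u\<in>V. \<forall>v\<in>V. u \<noteq> v \<longrightarrow> {u, v} \<in> E"
  shows "k34_sum V E"
proof -
  have fin: "finite V" using s by (rule simple_graph_finite)
  have "card V \<le> 4"
  proof (rule ccontr)
    assume "\<not> card V \<le> 4"
    then have "5 \<le> card V" by simp
    then obtain W where "W \<subseteq> V" "card W = 5" by (rule obtain_subset_with_card_n)
    moreover have "is_clique V E W" if "W \<subseteq> V" for W using complete that unfolding is_clique_def by blast
    ultimately show False using clique_has_K_minor[OF s] no_minor by blast
  qed
  moreover have "card V \<noteq> 2"
  proof
    assume "card V = 2"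
    then obtain u v where "V = {u, v}" "u \<noteq> v" by (meson card_2_iff)
    then obtain cs where cs: "is_cycle V E cs" using complete br unfolding bridgeless_def is_bridge_def by blast
    then have "card (set cs) = length cs" "set cs \<subseteq> V" by (simp_all add: is_cycle_def distinct_card)
    then have "length cs \<le> card V" using card_mono[OF fin] by metis
    then show False using is_cycle_length[OF cs] \<open>card V = 2\<close> by linarith
  qed
  moreover have "complete_graph V E"
    unfolding complete_graph_def
  proof
    show "E \<subseteq> {{u, v} |u v. u \<in> V \<and> v \<in> V \<and> u \<noteq> v}"
      using s unfolding simple_graph_def by blast
  qed (use complete in blast)
  ultimately show ?thesis using k34_sum.base[OF fin] \<open>2 \<le> card V\<close> by fastforce
qed

lemma chordal_clique_separator:
  assumes s: "simple_graph V E" and conn: "connected_graph V E" and ch: "chordal V E"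
    and no_minor: "\<not> has_K_minor 5 V E"
    and ab: "a \<in> V" "b \<in> V" "a \<noteq> b" "{a, b} \<notin> E"
  obtains S where "S \<subseteq> V - {a, b}" "is_clique V E S" "card S \<in> {1, 2, 3}"
    "(a, b) \<notin> (adj_on E (- S))\<^sup>*"
    "\<And>s. s \<in> S \<Longrightarrow> (\<exists>w\<in>comp_avoiding E S a. {w, s} \<in> E) \<and> (\<exists>w\<in>comp_avoiding E S b. {w, s} \<in> E)"
proof -
  obtain S where S: "S \<subseteq> V - {a, b}" and sep: "(a, b) \<notin> (adj_on E (- S))\<^sup>*"
    and minimal: "\<And>s. s \<in> S \<Longrightarrow> (a, b) \<in> (adj_on E (- (S - {s})))\<^sup>*"
    using minimal_separator_exists[OF s ab(1,2,4,3)] by blast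
  have abS: "a \<notin> S" "b \<notin> S" using S by blast+
  have sep': "(b, a) \<notin> (adj_on E (- S))\<^sup>*"
  proof
    assume "(b, a) \<in> (adj_on E (- S))\<^sup>*"
    then have "(a, b) \<in> (adj_on E (- S))\<^sup>*" by (rule symD[OF sym_rtrancl[OF sym_adj_on]])
    with sep show False by blast
  qed
  have attach: "(\<exists>w\<in>comp_avoiding E S a. {w, s} \<in> E) \<and> (\<exists>w\<in>comp_avoiding E S b. {w, s} \<in> E)"
    if s: "s \<in> S" for s
  proof
    show "\<exists>w\<in>comp_avoiding E S a. {w, s} \<in> E"
      by (rule comp_avoiding_neighbour[OF sep minimal[OF s] s abS(1)])
    have "(b, a) \<in> (adj_on E (- (S - {s})))\<^sup>*"
      by (rule symD[OF sym_rtrancl[OF sym_adj_on] minimal[OF s]])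
    then show "\<exists>w\<in>comp_avoiding E S b. {w, s} \<in> E"
      by (rule comp_avoiding_neighbour[OF sep' _ s abS(2)])
  qed
  have clique: "is_clique V E S"
    by (rule minimal_separator_clique[OF s ch _ abS sep attach]) (use S in blast)
  have "S \<noteq> {}" using sep conn ab(1,2) unfolding connected_graph_def adj_on_def by auto
  moreover have "finite S" using S simple_graph_finite[OF s] finite_subset by blast
  ultimately have "0 < card S" by (simp add: card_gt_0_iff)
  moreover have "card S < 4"
  proof (rule clique_attached_card_less[OF s _ clique])
    show "\<not> has_K_minor (Suc 4) V E" using no_minor by simp
    show "comp_avoiding E S a \<subseteq> V"
      by (rule comp_avoiding_subset[OF simple_graph_edges_within[OF s] ab(1)])
    show "comp_avoiding E S a \<inter> S = {}"
      using comp_avoiding_disjoint_separator[OF abS(1)] by blast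
    show "connected_on E (comp_avoiding E S a)" by (rule connected_on_comp_avoiding[OF abS(1)])
    show "\<forall>s\<in>S. \<exists>z\<in>comp_avoiding E S a. {s, z} \<in> E" using attach by (auto simp: insert_commute)
  qed (use comp_avoiding_self[of a E S] in blast)
  ultimately have "card S \<in> {1, 2, 3}" by auto
  then show ?thesis using that S clique sep attach by blast
qed

section \<open>Decomposition\<close>

abbreviation k34_conditions :: "'a set \<Rightarrow> 'a set set \<Rightarrow> bool" where
  "k34_conditions V E \<equiv> simple_graph V E \<and> connected_graph V E \<and> 2 \<le> card V \<and>
     bridgeless V E \<and> chordal V E \<and> \<not> has_K_minor 5 V E"

lemma k34_conditions_induced:
  assumes s: "simple_graph V E" and br: "bridgeless V E" and ch: "chordal V E"
    and no_minor: "\<not> has_K_minor 5 V E"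
    and W: "W \<subseteq> V" "2 \<le> card W" "connected_graph W {e \<in> E. e \<subseteq> W}"
    and C: "C \<subseteq> W" "connected_on E C"
    and attached: "\<And>x z. x \<in> W \<Longrightarrow> {x, z} \<in> E \<Longrightarrow> z \<notin> W \<Longrightarrow> x \<notin> C \<and> (\<exists>w\<in>C. {w, x} \<in> E)"
  shows "k34_conditions W {e \<in> E. e \<subseteq> W}"
proof (intro conjI)
  show "simple_graph W {e \<in> E. e \<subseteq> W}" by (rule simple_graph_induced[OF s W(1)])
  show "bridgeless W {e \<in> E. e \<subseteq> W}" by (rule bridgeless_induced_attached[OF s ch br W(1) C attached])
  show "chordal W {e \<in> E. e \<subseteq> W}" by (rule chordal_induced[OF ch W(1)])
  show "\<not> has_K_minor 5 W {e \<in> E. e \<subseteq> W}" using has_K_minor_induced[OF s W(1)] no_minor by blast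
qed (rule W(3), rule W(2))

lemma k34_conditions_comp_side:
  assumes G: "k34_conditions V E" and S: "S \<subseteq> V" "s0 \<in> S" and a: "a \<in> V" "a \<notin> S"
    and attach: "\<And>s. s \<in> S \<Longrightarrow> \<exists>w\<in>comp_avoiding E S a. {w, s} \<in> E"
  shows "k34_conditions (comp_avoiding E S a \<union> S) {e \<in> E. e \<subseteq> comp_avoiding E S a \<union> S}"
proof -
  let ?A = "comp_avoiding E S a"
  have s: "simple_graph V E" using G by blast
  have A: "?A \<subseteq> V" "a \<in> ?A" "connected_on E ?A"
    by (rule comp_avoiding_subset[OF simple_graph_edges_within[OF s] a(1)], rule comp_avoiding_self,
        rule connected_on_comp_avoiding[OF a(2)])
  have "card {a, s0} \<le> card (?A \<union> S)"
    using A S simple_graph_finite[OF s] by (intro card_mono) (auto intro: finite_subset)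
  moreover have "a \<noteq> s0" using a(2) S(2) by blast
  ultimately have "2 \<le> card (?A \<union> S)" by simp
  moreover have "x \<notin> ?A \<and> (\<exists>w\<in>?A. {w, x} \<in> E)" if "x \<in> ?A \<union> S" "{x, z} \<in> E" "z \<notin> ?A \<union> S" for x z
    using comp_avoiding_edge[OF a(2), of x E z] that attach by blast
  ultimately show ?thesis
    using k34_conditions_induced[of V E "?A \<union> S" ?A] G A S(1) connected_graph_comp_side[OF a(2) attach]
    by blast
qed

lemma k34_conditions_other_side:
  assumes G: "k34_conditions V E" and S: "is_clique V E S" "s0 \<in> S"
    and ab: "a \<in> V" "a \<notin> S" "b \<in> V" "b \<notin> S" and sep: "(a, b) \<notin> (adj_on E (- S))\<^sup>*"
    and attach: "\<And>s. s \<in> S \<Longrightarrow> \<exists>w\<in>comp_avoiding E S b. {w, s} \<in> E"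
  shows "k34_conditions (V - comp_avoiding E S a) {e \<in> E. e \<subseteq> V - comp_avoiding E S a}"
proof -
  let ?A = "comp_avoiding E S a" and ?B = "comp_avoiding E S b"
  have s: "simple_graph V E" and E: "edges_within V E" using G simple_graph_edges_within by blast+
  have SA: "S \<inter> ?A = {}" using comp_avoiding_disjoint_separator[OF ab(2)] by blast
  have "?B \<subseteq> V" "?A \<inter> ?B = {}"
    by (rule comp_avoiding_subset[OF E ab(3)], rule comp_avoiding_disjoint[OF sep])
  then have B: "?B \<subseteq> V - ?A" "b \<in> ?B" "?B \<inter> S = {}" "connected_on E ?B"
    using comp_avoiding_self[of b E S] comp_avoiding_disjoint_separator[OF ab(4)]
      connected_on_comp_avoiding[OF ab(4)] by blast+
  have "card {b, s0} \<le> card (V - ?A)"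
    using B S SA simple_graph_finite[OF s] unfolding is_clique_def by (intro card_mono) auto
  moreover have "b \<noteq> s0" using ab(4) S(2) by blast
  ultimately have "2 \<le> card (V - ?A)" by simp
  moreover have "x \<notin> ?B \<and> (\<exists>w\<in>?B. {w, x} \<in> E)"
    if x: "x \<in> V - ?A" "{x, z} \<in> E" "z \<notin> V - ?A" for x z
  proof -
    have "z \<in> ?A" using x edges_withinD[OF E] by blast
    then have "x \<in> S" using comp_avoiding_edge[OF ab(2), of z E x] x by (auto simp: insert_commute)
    then show ?thesis using B(3) attach by blast
  qed
  ultimately show ?thesis
    using k34_conditions_induced[of V E "V - ?A" ?B] G B(1,4) S(2)
      connected_graph_other_side[OF E _ ab(1,2) _ S(1)] by blast
qed

lemma k34_sum_split_nonadjacent: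
  fixes V :: "'a set"
  assumes G: "k34_conditions V E" and ab: "a \<in> V" "b \<in> V" "a \<noteq> b" "{a, b} \<notin> E"
    and IH: "\<And>(V' :: 'a set) E'. card V' < card V \<Longrightarrow> k34_conditions V' E' \<Longrightarrow> k34_sum V' E'"
  shows "k34_sum V E"
proof -
  have s: "simple_graph V E" using G by blast
  obtain S where S: "S \<subseteq> V - {a, b}" "is_clique V E S" "card S \<in> {1, 2, 3}"
    and sep: "(a, b) \<notin> (adj_on E (- S))\<^sup>*"
    and attach: "\<And>s. s \<in> S \<Longrightarrow> (\<exists>w\<in>comp_avoiding E S a. {w, s} \<in> E) \<and> (\<exists>w\<in>comp_avoiding E S b. {w, s} \<in> E)"
    using chordal_clique_separator[OF s _ _ _ ab] G by blast
  obtain s0 where s0: "s0 \<in> S" using S(3) by fastforce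
  have abS: "a \<notin> S" "b \<notin> S" using S(1) by blast+
  let ?A = "comp_avoiding E S a"
  let ?V1 = "?A \<union> S" and ?V2 = "V - ?A"
  have "?A \<subseteq> V" "?A \<inter> comp_avoiding E S b = {}"
    by (rule comp_avoiding_subset[OF simple_graph_edges_within[OF s] ab(1)],
        rule comp_avoiding_disjoint[OF sep])
  then have A: "?A \<subseteq> V" "?A \<inter> S = {}" "b \<notin> ?A"
    using comp_avoiding_disjoint_separator[OF abS(1)] comp_avoiding_self[of b E S] by blast+
  have "a \<in> ?A" by (rule comp_avoiding_self)
  then have "?V1 \<subset> V" "?V2 \<subset> V" using A S(1) ab(1,2) by blast+
  then have "card ?V1 < card V" "card ?V2 < card V" by (simp_all add: psubset_card_mono simple_graph_finite[OF s])
  then have k1: "k34_sum ?V1 {e \<in> E. e \<subseteq> ?V1}" and k2: "k34_sum ?V2 {e \<in> E. e \<subseteq> ?V2}"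
    using IH k34_conditions_comp_side[OF G _ s0 ab(1) abS(1)] attach S(1)
      k34_conditions_other_side[OF G S(2) s0 ab(1) abS(1) ab(2) abS(2) sep] by blast+
  have "?V1 \<inter> ?V2 = S" "?V1 \<union> ?V2 = V" using A S(1) by blast+
  moreover have "E = {e \<in> E. e \<subseteq> ?V1} \<union> {e \<in> E. e \<subseteq> ?V2}"
    by (rule comp_avoiding_split_edges[OF simple_graph_edges_within[OF s] abS(1)])
  moreover have "is_clique ?V1 {e \<in> E. e \<subseteq> ?V1} S" "is_clique ?V2 {e \<in> E. e \<subseteq> ?V2} S"
    using S(2) \<open>?V1 \<inter> ?V2 = S\<close> unfolding is_clique_def by auto
  ultimately show ?thesis using k34_sum.csum[OF k1 k2] S(3) by (metis (no_types, lifting))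
qed

lemma k34_conditions_k34_sum: "k34_conditions V E \<Longrightarrow> k34_sum V E"
proof (induction "card V" arbitrary: V E rule: less_induct)
  case less
  show ?case
  proof (cases "\<forall>u\<in>V. \<forall>v\<in>V. u \<noteq> v \<longrightarrow> {u, v} \<in> E")
    case True
    then show ?thesis using complete_bridgeless_k34_sum less.prems by blast
  next
    case False
    then obtain a b where "a \<in> V" "b \<in> V" "a \<noteq> b" "{a, b} \<notin> E" by blast
    then show ?thesis by (rule k34_sum_split_nonadjacent[OF less.prems _ _ _ _ less.hyps])
  qed
qed

theorem proposition3p5:
  fixes V :: "'a set" and E :: "'a set set"
  assumes "simple_graph V E" and "connected_graph V E" and "card V \<ge> 2"
  shows "(bridgeless V E \<and> chordal V E \<and> \<not> has_K_minor 5 V E) \<longleftrightarrow> k34_sum V E"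
proof
  assume "bridgeless V E \<and> chordal V E \<and> \<not> has_K_minor 5 V E"
  with assms show "k34_sum V E" by (intro k34_conditions_k34_sum) simp
next
  assume "k34_sum V E"
  then show "bridgeless V E \<and> chordal V E \<and> \<not> has_K_minor 5 V E"
    using k34_sum_bridgeless k34_sum_chordal k34_sum_no_K5_minor by blast
qed

end
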